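(* Let $M$ be a finite generic metric space and let $0<r<\min\{s(M)/4,\ e(M)/4,\ t(M)/6\}$. Then the sphere $\{Y\in\mathcal{M}: d_{GH}(M,Y)=r\}$ in $\mathcal{M}$ is path connected (as a subspace of the metric space $(\mathcal{M},d_{GH})$).
   Context: For a metric space $M$ with $\#M\ge3$: $s(M)=\inf\{|xx'|: x\ne x'\}$; $t(M)=\inf\{|xx'|+|x'x''|-|xx''|: x,x',x''\text{ pairwise distinct}\}$; $e(M)=\inf\{\operatorname{dis}f: f\colon M\to M \text{ bijective}, f\ne\mathrm{id}\}$, where $\operatorname{dis}f=\sup_{x,x'}||xx'|-|f(x)f(x')||$. $M$ is called generic if $\#M\ge3$ and $s(M),t(M),e(M)$ are all positive. $\mathcal{M}$ denotes the set of isometry classes of compact metric spaces endowed with the Gromov–Hausdorff distance $d_{GH}$ (a metric on $\mathcal{M}$): $d_{GH}(X,Y)$ is the infimum of $r$ such that there exist a metric space $Z$ and subsets $X',Y'\subset Z$ isometric to $X,Y$ with Hausdorff distance $d_H(X',Y')\le r$. *)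

theory Defs
  imports "HOL-Analysis.Analysis"
begin

text \<open>Every compact metric space has cardinality at most the continuum, hence is isometric to one
  whose carrier is a subset of the type real; so isometry classes of compact metric spaces are
  exactly isometry classes of values of type real metric that are compact.\<close>

type_synonym mspc = "real metric"

definition cms :: "mspc \<Rightarrow> bool" where
  "cms X \<longleftrightarrow> mspace X \<noteq> {} \<and> compact_space (mtopology_of X)"

definition isom_embed :: "'a metric \<Rightarrow> 'b metric \<Rightarrow> ('a \<Rightarrow> 'b) \<Rightarrow> bool" where
  "isom_embed X Z f \<longleftrightarrow> f ` mspace X \<subseteq> mspace Z \<and>
     (\<forall>x\<in>mspace X. \<forall>y\<in>mspace X. mdist Z (f x) (f y) = mdist X x y)"

definition isometric :: "'a metric \<Rightarrow> 'b metric \<Rightarrow> bool" where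
  "isometric X Y \<longleftrightarrow> (\<exists>f. bij_betw f (mspace X) (mspace Y) \<and>
     (\<forall>x\<in>mspace X. \<forall>y\<in>mspace X. mdist Y (f x) (f y) = mdist X x y))"

definition hdist :: "'a metric \<Rightarrow> 'a set \<Rightarrow> 'a set \<Rightarrow> real" where
  "hdist Z A B = max (SUP a\<in>A. INF b\<in>B. mdist Z a b) (SUP b\<in>B. INF a\<in>A. mdist Z a b)"

text \<open>Gromov--Hausdorff distance; the ambient space Z may w.l.o.g. be taken with carrier
  in the type real (replace Z by the union of the two images, of cardinality at most continuum).\<close>
definition dGH :: "mspc \<Rightarrow> mspc \<Rightarrow> real" where
  "dGH X Y = Inf {r. \<exists>(Z::real metric) f g. isom_embed X Z f \<and> isom_embed Y Z g \<and>
                        hdist Z (f ` mspace X) (g ` mspace Y) \<le> r}"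

definition s_inv :: "'a metric \<Rightarrow> real" where
  "s_inv M = Inf {mdist M x x' | x x'. x \<in> mspace M \<and> x' \<in> mspace M \<and> x \<noteq> x'}"

definition t_inv :: "'a metric \<Rightarrow> real" where
  "t_inv M = Inf {mdist M x x' + mdist M x' x'' - mdist M x x'' | x x' x''.
       x \<in> mspace M \<and> x' \<in> mspace M \<and> x'' \<in> mspace M \<and> x \<noteq> x' \<and> x' \<noteq> x'' \<and> x \<noteq> x''}"

definition dis :: "'a metric \<Rightarrow> ('a \<Rightarrow> 'a) \<Rightarrow> real" where
  "dis M f = (SUP p\<in>mspace M \<times> mspace M. \<bar>mdist M (fst p) (snd p) - mdist M (f (fst p)) (f (snd p))\<bar>)"

definition e_inv :: "'a metric \<Rightarrow> real" where
  "e_inv M = Inf {dis M f | f. bij_betw f (mspace M) (mspace M) \<and> (\<exists>x\<in>mspace M. f x \<noteq> x)}"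

definition generic :: "'a metric \<Rightarrow> bool" where
  "generic M \<longleftrightarrow> card (mspace M) \<ge> 3 \<and> s_inv M > 0 \<and> t_inv M > 0 \<and> e_inv M > 0"

text \<open>Path connectedness of a subset S of the Gromov--Hausdorff space (isometry classes of
  compact metric spaces with metric dGH), expressed through representatives: any two members
  are joined by a dGH-continuous path in S, endpoints up to isometry.\<close>
definition GH_path_connected :: "(mspc \<Rightarrow> bool) \<Rightarrow> bool" where
  "GH_path_connected S \<longleftrightarrow>
     (\<forall>Y1 Y2. S Y1 \<and> S Y2 \<longrightarrow>
        (\<exists>\<gamma>::real \<Rightarrow> mspc.
           (\<forall>t\<in>{0..1}. S (\<gamma> t)) \<and>
           (\<forall>t\<in>{0..1}. \<forall>\<epsilon>>0. \<exists>\<delta>>0. \<forall>t'\<in>{0..1}. \<bar>t' - t\<bar> < \<delta> \<longrightarrow> dGH (\<gamma> t) (\<gamma> t') < \<epsilon>) \<and>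
           isometric (\<gamma> 0) Y1 \<and> isometric (\<gamma> 1) Y2))"

end

theory Submission
  imports Defs
begin

text \<open>For \<open>r < min (s(M), e(M))/4\<close> a compact space \<open>X\<close> lies at distance \<open>r\<close> from \<open>M\<close> exactly
  when some map from \<open>X\<close> onto \<open>M\<close> has distortion at most \<open>2r\<close>, and no map has smaller
  distortion; such a map is unique, since two of them differ by a permutation of \<open>M\<close> of
  distortion \<open>< e(M)\<close>. Let \<open>T\<close> be \<open>M\<close> with one point doubled at distance \<open>2r\<close>. Given \<open>Y\<close> on
  the sphere with its map \<open>\<phi>\<close>, glue \<open>Y\<close> and \<open>T\<close> along \<open>\<phi>\<close> and, on their disjoint union,
  move linearly from the pull-back of the metric of \<open>Y\<close> through the glued metric to the
  pull-back of the metric of \<open>T\<close>. Every metric on the way distorts the projection to \<open>M\<close> by at most \<open>2r\<close>, with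
  equality attained (inside the copy of \<open>Y\<close> up to time \<open>1/2\<close>, at the doubled point afterwards),
  and distances move by at most \<open>16r |t - t'|\<close>. So each point of the sphere is joined to \<open>T\<close>
  within the sphere.\<close>

section \<open>Gromov--Hausdorff distance through correspondences\<close>

definition correspondence :: "('a \<times> 'b) set \<Rightarrow> 'a metric \<Rightarrow> 'b metric \<Rightarrow> bool" where
  "correspondence R X Y \<longleftrightarrow> R \<subseteq> mspace X \<times> mspace Y \<and>
     (\<forall>x\<in>mspace X. \<exists>y. (x,y) \<in> R) \<and> (\<forall>y\<in>mspace Y. \<exists>x. (x,y) \<in> R)"

definition distortion_le :: "('a \<times> 'b) set \<Rightarrow> 'a metric \<Rightarrow> 'b metric \<Rightarrow> real \<Rightarrow> bool" where
  "distortion_le R X Y D \<longleftrightarrow>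
     (\<forall>(x,y)\<in>R. \<forall>(x',y')\<in>R. \<bar>mdist X x x' - mdist Y y y'\<bar> \<le> D)"

lemma mdist_self [simp]: "x \<in> mspace m \<Longrightarrow> mdist m x x = 0"
  by simp

lemma cms_imp_bounded:
  assumes "cms X"
  obtains B where "\<And>x y. x \<in> mspace X \<Longrightarrow> y \<in> mspace X \<Longrightarrow> mdist X x y \<le> B"
proof -
  have "compactin (mtopology_of X) (mspace X)"
    using assms unfolding cms_def compact_space_def by simp
  hence "Metric_space.mbounded (mspace X) (mdist X) (mspace X)"
    by (simp add: Metric_space.compactin_imp_mbounded mtopology_of_def)
  thus ?thesis using that by (auto simp: Metric_space.mbounded_alt)
qed

lemma cINF_lower_nonneg:
  assumes "b \<in> B" "\<forall>b\<in>B. (0::real) \<le> f b"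
  shows "(INF b\<in>B. f b) \<le> f b"
  by (rule cINF_lower[OF _ assms(1)]) (use assms(2) in \<open>auto intro: bdd_belowI2\<close>)

lemma hdist_le_if_close:
  assumes "A \<noteq> {}" "B \<noteq> {}"
    and "\<forall>a\<in>A. \<exists>b\<in>B. mdist Z a b \<le> c" "\<forall>b\<in>B. \<exists>a\<in>A. mdist Z a b \<le> c"
  shows "hdist Z A B \<le> c"
proof -
  have "(SUP a\<in>A. INF b\<in>B. mdist Z a b) \<le> c"
  proof (rule cSUP_least[OF assms(1)])
    fix a assume "a \<in> A"
    then obtain b where "b \<in> B" "mdist Z a b \<le> c" using assms(3) by auto
    thus "(INF b\<in>B. mdist Z a b) \<le> c" using cINF_lower_nonneg[of b B "mdist Z a"] by simp
  qed
  moreover have "(SUP b\<in>B. INF a\<in>A. mdist Z a b) \<le> c"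
  proof (rule cSUP_least[OF assms(2)])
    fix b assume "b \<in> B"
    then obtain a where "a \<in> A" "mdist Z a b \<le> c" using assms(4) by auto
    thus "(INF a\<in>A. mdist Z a b) \<le> c" using cINF_lower_nonneg[of a A "\<lambda>a. mdist Z a b"] by simp
  qed
  ultimately show ?thesis unfolding hdist_def by simp
qed

lemma INF_le_SUP_INF:
  fixes f :: "'a \<Rightarrow> 'b \<Rightarrow> real"
  assumes "a \<in> A" "b0 \<in> B" "\<forall>a\<in>A. \<forall>b\<in>B. 0 \<le> f a b \<and> f a b \<le> K"
  shows "(INF b\<in>B. f a b) \<le> (SUP a\<in>A. INF b\<in>B. f a b)"
proof (rule cSUP_upper[OF assms(1)], rule bdd_aboveI2)
  fix a assume "a \<in> A"
  have "(INF b\<in>B. f a b) \<le> f a b0"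
    using cINF_lower_nonneg[OF assms(2), of "f a"] assms(3) \<open>a \<in> A\<close> by simp
  also have "\<dots> \<le> K" using assms(2,3) \<open>a \<in> A\<close> by auto
  finally show "(INF b\<in>B. f a b) \<le> K" .
qed

lemma hdist_nonneg:
  assumes "A \<noteq> {}" "B \<noteq> {}" "\<forall>a\<in>A. \<forall>b\<in>B. mdist Z a b \<le> K"
  shows "0 \<le> hdist Z A B"
proof -
  obtain a0 b0 where "a0 \<in> A" "b0 \<in> B" using assms by auto
  have "0 \<le> (INF b\<in>B. mdist Z a0 b)" by (rule cINF_greatest[OF assms(2)]) simp
  also have "\<dots> \<le> (SUP a\<in>A. INF b\<in>B. mdist Z a b)"
    by (rule INF_le_SUP_INF[OF \<open>a0 \<in> A\<close> \<open>b0 \<in> B\<close>]) (use assms(3) in simp)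
  finally show ?thesis unfolding hdist_def by simp
qed

lemma hdist_less_imp_close:
  assumes "A \<noteq> {}" "B \<noteq> {}" "\<forall>a\<in>A. \<forall>b\<in>B. mdist Z a b \<le> K" and "hdist Z A B < \<rho>"
  shows "\<forall>a\<in>A. \<exists>b\<in>B. mdist Z a b < \<rho>" "\<forall>b\<in>B. \<exists>a\<in>A. mdist Z a b < \<rho>"
proof -
  obtain a0 b0 where ab0: "a0 \<in> A" "b0 \<in> B" using assms by auto
  show "\<forall>a\<in>A. \<exists>b\<in>B. mdist Z a b < \<rho>"
  proof
    fix a assume "a \<in> A"
    have "(INF b\<in>B. mdist Z a b) \<le> (SUP a\<in>A. INF b\<in>B. mdist Z a b)"
      using INF_le_SUP_INF[OF \<open>a \<in> A\<close> ab0(2), of "mdist Z"] assms(3) by fastforce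
    hence "(INF b\<in>B. mdist Z a b) < \<rho>" using assms(4) unfolding hdist_def by linarith
    moreover have "bdd_below (mdist Z a ` B)" by (rule bdd_belowI[where m=0]) auto
    ultimately show "\<exists>b\<in>B. mdist Z a b < \<rho>" using cINF_less_iff[OF assms(2)] by blast
  qed
  show "\<forall>b\<in>B. \<exists>a\<in>A. mdist Z a b < \<rho>"
  proof
    fix b assume "b \<in> B"
    have "(INF a\<in>A. mdist Z a b) \<le> (SUP b\<in>B. INF a\<in>A. mdist Z a b)"
      using INF_le_SUP_INF[OF \<open>b \<in> B\<close> ab0(1), of "\<lambda>b a. mdist Z a b"] assms(3) by fastforce
    hence "(INF a\<in>A. mdist Z a b) < \<rho>" using assms(4) unfolding hdist_def by linarith
    moreover have "bdd_below ((\<lambda>a. mdist Z a b) ` A)" by (rule bdd_belowI[where m=0]) auto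
    ultimately show "\<exists>a\<in>A. mdist Z a b < \<rho>" using cINF_less_iff[OF assms(1)] by blast
  qed
qed

text \<open>The ambient spaces in \<open>dGH\<close> have carriers in \<open>real\<close>, so a disjoint union is transported
  along the injection below (\<open>arctan\<close> takes values in \<open>(-pi/2, pi/2)\<close>, so the shifted copies
  are disjoint).\<close>

definition sum_to_real :: "real + real \<Rightarrow> real" where
  "sum_to_real w = (case w of Inl x \<Rightarrow> arctan x | Inr y \<Rightarrow> arctan y + 4)"

definition real_to_sum :: "real \<Rightarrow> real + real" where
  "real_to_sum u = (if u < 2 then Inl (tan u) else Inr (tan (u - 4)))"

lemma real_to_sum_to_real [simp]: "real_to_sum (sum_to_real w) = w"
proof (cases w)
  case (Inl x)
  have "arctan x < 2" using arctan_ubound[of x] pi_less_4 by linarith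
  thus ?thesis using Inl by (simp add: sum_to_real_def real_to_sum_def tan_arctan)
next
  case (Inr y)
  have "\<not> arctan y + 4 < 2" using arctan_lbound[of y] pi_less_4 by linarith
  thus ?thesis using Inr by (simp add: sum_to_real_def real_to_sum_def tan_arctan)
qed

lemma sum_to_real_eq_iff [simp]: "sum_to_real a = sum_to_real b \<longleftrightarrow> a = b"
  by (metis real_to_sum_to_real)

definition encode_metric :: "(real + real) set \<Rightarrow> (real + real \<Rightarrow> real + real \<Rightarrow> real) \<Rightarrow> mspc" where
  "encode_metric S d = metric (sum_to_real ` S, \<lambda>u v. d (real_to_sum u) (real_to_sum v))"

lemma
  assumes "Metric_space S d"
  shows mspace_encode_metric: "mspace (encode_metric S d) = sum_to_real ` S"
    and mdist_encode_metric [simp]: "mdist (encode_metric S d) (sum_to_real a) (sum_to_real b) = d a b"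
proof -
  interpret Metric_space S d by fact
  interpret E: Metric_space "sum_to_real ` S" "\<lambda>u v. d (real_to_sum u) (real_to_sum v)"
    by unfold_locales (auto simp: commute intro: triangle)
  show "mspace (encode_metric S d) = sum_to_real ` S"
    and "mdist (encode_metric S d) (sum_to_real a) (sum_to_real b) = d a b"
    by (simp_all add: encode_metric_def)
qed

definition glue_cross :: "'a metric \<Rightarrow> 'b metric \<Rightarrow> ('a \<times> 'b) set \<Rightarrow> real \<Rightarrow> 'a \<Rightarrow> 'b \<Rightarrow> real" where
  "glue_cross X Y R c x y = (INF (x',y')\<in>R. mdist X x x' + c + mdist Y y' y)"

definition glue_dist :: "'a metric \<Rightarrow> 'b metric \<Rightarrow> ('a \<times> 'b) set \<Rightarrow> real \<Rightarrow> 'a + 'b \<Rightarrow> 'a + 'b \<Rightarrow> real" where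
  "glue_dist X Y R c u v = (case (u, v) of
       (Inl x, Inl x') \<Rightarrow> mdist X x x'
     | (Inl x, Inr y) \<Rightarrow> glue_cross X Y R c x y
     | (Inr y, Inl x) \<Rightarrow> glue_cross X Y R c x y
     | (Inr y, Inr y') \<Rightarrow> mdist Y y y')"

lemma glue_dist_simps [simp]:
  "glue_dist X Y R c (Inl x) (Inl x') = mdist X x x'"
  "glue_dist X Y R c (Inl x) (Inr y) = glue_cross X Y R c x y"
  "glue_dist X Y R c (Inr y) (Inl x) = glue_cross X Y R c x y"
  "glue_dist X Y R c (Inr y) (Inr y') = mdist Y y y'"
  by (simp_all add: glue_dist_def)

lemma glue_cross_le:
  assumes "0 \<le> c" "(x',y') \<in> R"
  shows "glue_cross X Y R c x y \<le> mdist X x x' + c + mdist Y y' y"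
  unfolding glue_cross_def
proof (rule cInf_lower2[OF imageI[OF assms(2)]])
  show "bdd_below ((\<lambda>(x', y'). mdist X x x' + c + mdist Y y' y) ` R)"
    by (rule bdd_belowI[where m=0]) (use assms(1) in auto)
qed simp

lemma glue_cross_ge:
  assumes "R \<noteq> {}" "\<And>x' y'. (x',y') \<in> R \<Longrightarrow> K \<le> mdist X x x' + c + mdist Y y' y"
  shows "K \<le> glue_cross X Y R c x y"
  unfolding glue_cross_def by (rule cINF_greatest) (use assms in auto)

locale gluing =
  fixes X :: "'a metric" and Y :: "'b metric" and R :: "('a \<times> 'b) set" and c :: real
  assumes R_nonempty: "R \<noteq> {}" and R_subset: "R \<subseteq> mspace X \<times> mspace Y" and c_pos: "0 < c"
    and R_distortion: "distortion_le R X Y (2*c)"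
begin

abbreviation "C \<equiv> glue_cross X Y R c"

lemma R_dist:
  "(x,y) \<in> R \<Longrightarrow> (x',y') \<in> R \<Longrightarrow> \<bar>mdist X x x' - mdist Y y y'\<bar> \<le> 2*c"
  using R_distortion unfolding distortion_le_def by fast

lemma glue_cross_ge_c: "c \<le> C x y"
  by (rule glue_cross_ge[OF R_nonempty]) (simp add: add_nonneg_nonneg)

lemma glue_cross_le_left:
  assumes "x1 \<in> mspace X" "x2 \<in> mspace X"
  shows "C x1 y \<le> mdist X x1 x2 + C x2 y"
proof -
  have "C x1 y - mdist X x1 x2 \<le> C x2 y"
  proof (rule glue_cross_ge[OF R_nonempty])
    fix x' y' assume xy: "(x',y') \<in> R"
    hence "x' \<in> mspace X" using R_subset by auto
    hence "mdist X x1 x' \<le> mdist X x1 x2 + mdist X x2 x'"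
      using mdist_triangle assms by metis
    thus "C x1 y - mdist X x1 x2 \<le> mdist X x2 x' + c + mdist Y y' y"
      using glue_cross_le[OF _ xy, where X=X and Y=Y and c=c and x=x1 and y=y] c_pos by simp
  qed
  thus ?thesis by linarith
qed

lemma glue_cross_le_right:
  assumes "y1 \<in> mspace Y" "y2 \<in> mspace Y"
  shows "C x y2 \<le> C x y1 + mdist Y y1 y2"
proof -
  have "C x y2 - mdist Y y1 y2 \<le> C x y1"
  proof (rule glue_cross_ge[OF R_nonempty])
    fix x' y' assume xy: "(x',y') \<in> R"
    hence "y' \<in> mspace Y" using R_subset by auto
    hence "mdist Y y' y2 \<le> mdist Y y' y1 + mdist Y y1 y2"
      using mdist_triangle assms by metis
    thus "C x y2 - mdist Y y1 y2 \<le> mdist X x x' + c + mdist Y y' y1"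
      using glue_cross_le[OF _ xy, where X=X and Y=Y and c=c and x=x and y=y2] c_pos by simp
  qed
  thus ?thesis by linarith
qed

text \<open>Going from \<open>x1\<close> to \<open>x2\<close> through \<open>y\<close> is not shorter than \<open>d(x1,x2)\<close>: for \<open>(x',y')\<close> and
  \<open>(x'',y'')\<close> in \<open>R\<close> the distortion bound gives \<open>d(x',x'') \<le> d(y',y'') + 2c\<close>, and the two
  gluing constants pay for the \<open>2c\<close>.\<close>

lemma mdist_left_le_glue_cross:
  assumes "x1 \<in> mspace X" "x2 \<in> mspace X" "y \<in> mspace Y"
  shows "mdist X x1 x2 \<le> C x1 y + C x2 y"
proof -
  have "mdist X x1 x2 - C x2 y \<le> C x1 y"
  proof (rule glue_cross_ge[OF R_nonempty])
    fix x' y' assume xy: "(x',y') \<in> R"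
    hence x': "x' \<in> mspace X" "y' \<in> mspace Y" using R_subset by auto
    have "mdist X x1 x2 - (mdist X x1 x' + c + mdist Y y' y) \<le> C x2 y"
    proof (rule glue_cross_ge[OF R_nonempty])
      fix x'' y'' assume xy2: "(x'',y'') \<in> R"
      hence x'': "x'' \<in> mspace X" "y'' \<in> mspace Y" using R_subset by auto
      have "mdist X x1 x2 \<le> mdist X x1 x' + mdist X x' x'' + mdist X x'' x2"
        using mdist_triangle[where m=X and x=x1 and y=x' and z=x2] mdist_triangle[where m=X and x=x' and y=x'' and z=x2] assms x' x'' by linarith
      moreover have "mdist X x' x'' \<le> mdist Y y' y'' + 2*c" using R_dist[OF xy xy2] by linarith
      moreover have "mdist Y y' y'' \<le> mdist Y y' y + mdist Y y y''"
        using mdist_triangle[where m=Y and x=y' and y=y and z=y''] assms x' x'' by simp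
      ultimately show "mdist X x1 x2 - (mdist X x1 x' + c + mdist Y y' y) \<le> mdist X x2 x'' + c + mdist Y y'' y"
        using mdist_commute[of X x'' x2] mdist_commute[of Y y y''] by linarith
    qed
    thus "mdist X x1 x2 - C x2 y \<le> mdist X x1 x' + c + mdist Y y' y" by linarith
  qed
  thus ?thesis by linarith
qed

lemma mdist_right_le_glue_cross:
  assumes "y1 \<in> mspace Y" "y2 \<in> mspace Y" "x \<in> mspace X"
  shows "mdist Y y1 y2 \<le> C x y1 + C x y2"
proof -
  have "mdist Y y1 y2 - C x y2 \<le> C x y1"
  proof (rule glue_cross_ge[OF R_nonempty])
    fix x' y' assume xy: "(x',y') \<in> R"
    hence x': "x' \<in> mspace X" "y' \<in> mspace Y" using R_subset by auto
    have "mdist Y y1 y2 - (mdist X x x' + c + mdist Y y' y1) \<le> C x y2"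
    proof (rule glue_cross_ge[OF R_nonempty])
      fix x'' y'' assume xy2: "(x'',y'') \<in> R"
      hence x'': "x'' \<in> mspace X" "y'' \<in> mspace Y" using R_subset by auto
      have "mdist Y y1 y2 \<le> mdist Y y1 y' + mdist Y y' y'' + mdist Y y'' y2"
        using mdist_triangle[where m=Y and x=y1 and y=y' and z=y2] mdist_triangle[where m=Y and x=y' and y=y'' and z=y2] assms x' x'' by linarith
      moreover have "mdist Y y' y'' \<le> mdist X x' x'' + 2*c" using R_dist[OF xy xy2] by linarith
      moreover have "mdist X x' x'' \<le> mdist X x' x + mdist X x x''"
        using mdist_triangle[where m=X and x=x' and y=x and z=x''] assms x' x'' by simp
      ultimately show "mdist Y y1 y2 - (mdist X x x' + c + mdist Y y' y1) \<le> mdist X x x'' + c + mdist Y y'' y2"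
        using mdist_commute[of X x' x] mdist_commute[of Y y1 y'] by linarith
    qed
    thus "mdist Y y1 y2 - C x y2 \<le> mdist X x x' + c + mdist Y y' y1" by linarith
  qed
  thus ?thesis by linarith
qed

lemma glue_dist_metric: "Metric_space (mspace X <+> mspace Y) (glue_dist X Y R c)"
proof
  show "0 \<le> glue_dist X Y R c u v" for u v
    using glue_cross_ge_c c_pos by (cases u; cases v) (auto intro: order_trans[of 0 c])
  show "glue_dist X Y R c u v = glue_dist X Y R c v u" for u v
    by (cases u; cases v) (auto simp: mdist_commute)
  show "(glue_dist X Y R c u v = 0) = (u = v)"
    if "u \<in> mspace X <+> mspace Y" "v \<in> mspace X <+> mspace Y" for u v
    using that glue_cross_ge_c c_pos by (cases u; cases v) (auto, (metis not_le order_refl)+)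
  show "glue_dist X Y R c u w \<le> glue_dist X Y R c u v + glue_dist X Y R c v w"
    if "u \<in> mspace X <+> mspace Y" "v \<in> mspace X <+> mspace Y" "w \<in> mspace X <+> mspace Y" for u v w
  proof -
    have "C x1 y \<le> mdist X x2 x1 + C x2 y" if "x1 \<in> mspace X" "x2 \<in> mspace X" for x1 x2 y
      using glue_cross_le_left[OF that] mdist_commute[of X x1 x2] by simp
    moreover have "C x y2 \<le> C x y1 + mdist Y y2 y1" if "y1 \<in> mspace Y" "y2 \<in> mspace Y" for x y1 y2
      using glue_cross_le_right[OF that] mdist_commute[of Y y1 y2] by simp
    ultimately show ?thesis
      using that mdist_triangle glue_cross_le_left glue_cross_le_right
        mdist_left_le_glue_cross mdist_right_le_glue_cross
      by (cases u; cases v; cases w) (auto simp: add.commute)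
  qed
qed

end

definition GH_upper_bounds :: "mspc \<Rightarrow> mspc \<Rightarrow> real set" where
  "GH_upper_bounds X Y = {r. \<exists>(Z::real metric) f g. isom_embed X Z f \<and> isom_embed Y Z g \<and>
                        hdist Z (f ` mspace X) (g ` mspace Y) \<le> r}"

lemma dGH_eq_Inf: "dGH X Y = Inf (GH_upper_bounds X Y)"
  by (simp add: dGH_def GH_upper_bounds_def)

lemma isom_embed_images_bounded:
  assumes "cms X" "cms Y" "isom_embed X Z f" "isom_embed Y Z g"
  obtains K where "\<forall>a\<in>f ` mspace X. \<forall>b\<in>g ` mspace Y. mdist Z a b \<le> K"
proof -
  obtain BX where BX: "\<And>x y. x \<in> mspace X \<Longrightarrow> y \<in> mspace X \<Longrightarrow> mdist X x y \<le> BX"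
    using cms_imp_bounded[OF assms(1)] by blast
  obtain BY where BY: "\<And>x y. x \<in> mspace Y \<Longrightarrow> y \<in> mspace Y \<Longrightarrow> mdist Y x y \<le> BY"
    using cms_imp_bounded[OF assms(2)] by blast
  obtain x0 y0 where x0: "x0 \<in> mspace X" and y0: "y0 \<in> mspace Y"
    using assms(1,2) unfolding cms_def by blast
  have f: "f ` mspace X \<subseteq> mspace Z" "\<forall>x\<in>mspace X. \<forall>y\<in>mspace X. mdist Z (f x) (f y) = mdist X x y"
    and g: "g ` mspace Y \<subseteq> mspace Z" "\<forall>x\<in>mspace Y. \<forall>y\<in>mspace Y. mdist Z (g x) (g y) = mdist Y x y"
    using assms(3,4) unfolding isom_embed_def by auto
  have "mdist Z (f x) (g y) \<le> BX + mdist Z (f x0) (g y0) + BY"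
    if "x \<in> mspace X" "y \<in> mspace Y" for x y
  proof -
    have "mdist Z (f x) (g y) \<le> mdist Z (f x) (f x0) + mdist Z (f x0) (g y0) + mdist Z (g y0) (g y)"
      using mdist_triangle[where m=Z and x="f x" and y="f x0" and z="g y"]
        mdist_triangle[where m=Z and x="f x0" and y="g y0" and z="g y"] f(1) g(1) that x0 y0
      by (auto simp: image_subset_iff)
    moreover have "mdist Z (f x) (f x0) \<le> BX" "mdist Z (g y0) (g y) \<le> BY"
      using f(2) g(2) BX BY that x0 y0 by auto
    ultimately show ?thesis by linarith
  qed
  thus thesis using that by blast
qed

lemma GH_upper_bounds_bdd_below:
  assumes "cms X" "cms Y"
  shows "bdd_below (GH_upper_bounds X Y)"
proof (rule bdd_belowI[where m=0])
  fix r assume "r \<in> GH_upper_bounds X Y"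
  then obtain Z :: "real metric" and f g where e: "isom_embed X Z f" "isom_embed Y Z g"
    "hdist Z (f ` mspace X) (g ` mspace Y) \<le> r"
    unfolding GH_upper_bounds_def by blast
  obtain K where "\<forall>a\<in>f ` mspace X. \<forall>b\<in>g ` mspace Y. mdist Z a b \<le> K"
    using isom_embed_images_bounded[OF assms e(1,2)] .
  moreover have "f ` mspace X \<noteq> {}" "g ` mspace Y \<noteq> {}" using assms unfolding cms_def by simp_all
  ultimately have "0 \<le> hdist Z (f ` mspace X) (g ` mspace Y)" by (rule hdist_nonneg[rotated -1])
  thus "0 \<le> r" using e(3) by linarith
qed

text \<open>The gluing realises the distortion bound: \<open>x\<close> and \<open>y\<close> with \<open>(x,y) \<in> R\<close> are at
  distance \<open>c\<close>.\<close>

lemma glue_in_GH_upper_bounds: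
  assumes "mspace X \<noteq> {}" "correspondence R X Y" "0 < c" "distortion_le R X Y (2*c)"
  shows "c \<in> GH_upper_bounds X Y"
proof -
  have R: "R \<subseteq> mspace X \<times> mspace Y" "\<forall>x\<in>mspace X. \<exists>y. (x,y) \<in> R" "\<forall>y\<in>mspace Y. \<exists>x. (x,y) \<in> R"
    using assms(2) unfolding correspondence_def by auto
  interpret gluing X Y R c
    using assms R by unfold_locales blast+
  define Z where "Z = encode_metric (mspace X <+> mspace Y) (glue_dist X Y R c)"
  have mZ: "mspace Z = sum_to_real ` (mspace X <+> mspace Y)"
    and dZ: "\<And>a b. mdist Z (sum_to_real a) (sum_to_real b) = glue_dist X Y R c a b"
    unfolding Z_def using glue_dist_metric by (simp_all add: mspace_encode_metric)
  have close: "mdist Z (sum_to_real (Inl x)) (sum_to_real (Inr y)) \<le> c" if "(x,y) \<in> R" for x y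
  proof -
    have "x \<in> mspace X" "y \<in> mspace Y" using that R(1) by auto
    thus ?thesis using dZ glue_cross_le[OF _ that, of c X Y x y] c_pos by simp
  qed
  have "isom_embed X Z (sum_to_real \<circ> Inl)" "isom_embed Y Z (sum_to_real \<circ> Inr)"
    unfolding isom_embed_def mZ using dZ by auto
  moreover have "hdist Z ((sum_to_real \<circ> Inl) ` mspace X) ((sum_to_real \<circ> Inr) ` mspace Y) \<le> c"
  proof (rule hdist_le_if_close)
    show "(sum_to_real \<circ> Inl) ` mspace X \<noteq> {}" "(sum_to_real \<circ> Inr) ` mspace Y \<noteq> {}"
      using assms(1) R by auto
    show "\<forall>a\<in>(sum_to_real \<circ> Inl) ` mspace X. \<exists>b\<in>(sum_to_real \<circ> Inr) ` mspace Y. mdist Z a b \<le> c"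
      using R close by fastforce
    show "\<forall>b\<in>(sum_to_real \<circ> Inr) ` mspace Y. \<exists>a\<in>(sum_to_real \<circ> Inl) ` mspace X. mdist Z a b \<le> c"
      using R close by fastforce
  qed
  ultimately show ?thesis
    unfolding GH_upper_bounds_def by (intro CollectI exI[of _ Z] exI conjI)
qed

lemma dGH_le_correspondence:
  assumes "cms X" "cms Y" "correspondence R X Y" "0 \<le> c" "distortion_le R X Y (2*c)"
  shows "dGH X Y \<le> c"
proof (rule dense_ge)
  fix c' assume "c < c'"
  have "distortion_le R X Y (2*c')"
    using assms(5) \<open>c < c'\<close> unfolding distortion_le_def by fastforce
  hence "c' \<in> GH_upper_bounds X Y"
    using glue_in_GH_upper_bounds assms \<open>c < c'\<close> unfolding cms_def by simp
  thus "dGH X Y \<le> c'"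
    unfolding dGH_eq_Inf using GH_upper_bounds_bdd_below[OF assms(1,2)] by (simp add: cInf_lower)
qed

lemma GH_upper_bounds_nonempty:
  assumes "cms X" "cms Y"
  shows "GH_upper_bounds X Y \<noteq> {}"
proof -
  obtain BX where BX: "\<And>x y. x \<in> mspace X \<Longrightarrow> y \<in> mspace X \<Longrightarrow> mdist X x y \<le> BX"
    using cms_imp_bounded[OF assms(1)] by blast
  obtain BY where BY: "\<And>x y. x \<in> mspace Y \<Longrightarrow> y \<in> mspace Y \<Longrightarrow> mdist Y x y \<le> BY"
    using cms_imp_bounded[OF assms(2)] by blast
  have "distortion_le (mspace X \<times> mspace Y) X Y (2 * max 1 (BX + BY))"
    unfolding distortion_le_def
  proof clarsimp
    fix x x' y y' assume "x \<in> mspace X" "x' \<in> mspace X" "y \<in> mspace Y" "y' \<in> mspace Y"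
    hence "mdist X x x' \<le> BX" "mdist Y y y' \<le> BY" using BX BY by auto
    moreover have "0 \<le> mdist X x x'" "0 \<le> mdist Y y y'" by auto
    ultimately have "\<bar>mdist X x x' - mdist Y y y'\<bar> \<le> BX + BY" unfolding abs_le_iff by linarith
    also have "\<dots> \<le> 2 * max 1 (BX + BY)" by (simp add: max_def)
    finally show "\<bar>mdist X x x' - mdist Y y y'\<bar> \<le> 2 * max 1 (BX + BY)" .
  qed
  moreover have "correspondence (mspace X \<times> mspace Y) X Y"
    using assms unfolding correspondence_def cms_def by auto
  ultimately have "max 1 (BX + BY) \<in> GH_upper_bounds X Y"
    using glue_in_GH_upper_bounds assms unfolding cms_def by simp
  thus ?thesis by auto
qed

lemma abs_mdist_diff_le:
  assumes "a \<in> mspace Z" "a' \<in> mspace Z" "b \<in> mspace Z" "b' \<in> mspace Z"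
  shows "\<bar>mdist Z a a' - mdist Z b b'\<bar> \<le> mdist Z a b + mdist Z a' b'"
proof -
  have "mdist Z a a' \<le> mdist Z a b + mdist Z b b' + mdist Z b' a'"
    using mdist_triangle[where m=Z and x=a and y=b and z=a'] mdist_triangle[where m=Z and x=b and y=b' and z=a']
      assms by linarith
  moreover have "mdist Z b b' \<le> mdist Z b a + mdist Z a a' + mdist Z a' b'"
    using mdist_triangle[where m=Z and x=b and y=a and z=b'] mdist_triangle[where m=Z and x=a and y=a' and z=b']
      assms by linarith
  ultimately show ?thesis using mdist_commute[of Z a b] mdist_commute[of Z a' b'] by linarith
qed

lemma dGH_less_imp_correspondence:
  assumes "cms X" "cms Y" "dGH X Y < \<rho>"
  obtains R where "correspondence R X Y" "distortion_le R X Y (2*\<rho>)"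
proof -
  obtain r where "r \<in> GH_upper_bounds X Y" "r < \<rho>"
    using cInf_lessD[OF GH_upper_bounds_nonempty[OF assms(1,2)]] assms(3)
    unfolding dGH_eq_Inf by blast
  then obtain Z :: "real metric" and f g where e: "isom_embed X Z f" "isom_embed Y Z g"
    "hdist Z (f ` mspace X) (g ` mspace Y) < \<rho>"
    unfolding GH_upper_bounds_def using le_less_trans by blast
  obtain K where K: "\<forall>a\<in>f ` mspace X. \<forall>b\<in>g ` mspace Y. mdist Z a b \<le> K"
    using isom_embed_images_bounded[OF assms(1,2) e(1,2)] .
  have "f ` mspace X \<noteq> {}" "g ` mspace Y \<noteq> {}" using assms(1,2) unfolding cms_def by simp_all
  note close = hdist_less_imp_close[OF this K e(3)]
  have f: "f ` mspace X \<subseteq> mspace Z" "\<forall>x\<in>mspace X. \<forall>y\<in>mspace X. mdist Z (f x) (f y) = mdist X x y"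
    and g: "g ` mspace Y \<subseteq> mspace Z" "\<forall>x\<in>mspace Y. \<forall>y\<in>mspace Y. mdist Z (g x) (g y) = mdist Y x y"
    using e(1,2) unfolding isom_embed_def by auto
  define R where "R = {(x,y). x \<in> mspace X \<and> y \<in> mspace Y \<and> mdist Z (f x) (g y) < \<rho>}"
  have "correspondence R X Y"
    unfolding correspondence_def R_def
  proof (intro conjI ballI)
    fix x assume "x \<in> mspace X"
    thus "\<exists>y. (x, y) \<in> {(x, y). x \<in> mspace X \<and> y \<in> mspace Y \<and> mdist Z (f x) (g y) < \<rho>}"
      using close(1) by blast
  next
    fix y assume "y \<in> mspace Y"
    thus "\<exists>x. (x, y) \<in> {(x, y). x \<in> mspace X \<and> y \<in> mspace Y \<and> mdist Z (f x) (g y) < \<rho>}"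
      using close(2) by blast
  qed auto
  moreover have "distortion_le R X Y (2*\<rho>)"
    unfolding distortion_le_def
  proof clarify
    fix x y x' y' assume "(x,y) \<in> R" "(x',y') \<in> R"
    hence m: "x \<in> mspace X" "y \<in> mspace Y" "x' \<in> mspace X" "y' \<in> mspace Y"
      "mdist Z (f x) (g y) < \<rho>" "mdist Z (f x') (g y') < \<rho>" unfolding R_def by auto
    hence "\<bar>mdist Z (f x) (f x') - mdist Z (g y) (g y')\<bar> \<le> mdist Z (f x) (g y) + mdist Z (f x') (g y')"
      using f(1) g(1) by (intro abs_mdist_diff_le) auto
    thus "\<bar>mdist X x x' - mdist Y y y'\<bar> \<le> 2*\<rho>" using f(2) g(2) m by auto
  qed
  ultimately show thesis using that by blast
qed

section \<open>Maps onto a finite generic space\<close>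

definition onto_distortion_le :: "'a metric \<Rightarrow> 'b metric \<Rightarrow> ('a \<Rightarrow> 'b) \<Rightarrow> real \<Rightarrow> bool" where
  "onto_distortion_le X M \<phi> D \<longleftrightarrow> \<phi> ` mspace X = mspace M \<and>
     (\<forall>x\<in>mspace X. \<forall>x'\<in>mspace X. \<bar>mdist X x x' - mdist M (\<phi> x) (\<phi> x')\<bar> \<le> D)"

lemma onto_distortion_leD:
  assumes "onto_distortion_le X M \<phi> D"
  shows "x \<in> mspace X \<Longrightarrow> \<phi> x \<in> mspace M"
    and "m \<in> mspace M \<Longrightarrow> \<exists>x\<in>mspace X. \<phi> x = m"
    and "x \<in> mspace X \<Longrightarrow> x' \<in> mspace X \<Longrightarrow> \<bar>mdist X x x' - mdist M (\<phi> x) (\<phi> x')\<bar> \<le> D"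
  using assms unfolding onto_distortion_le_def by (auto, metis imageE)

lemma onto_distortion_le_mono:
  "onto_distortion_le X M \<phi> D \<Longrightarrow> D \<le> D' \<Longrightarrow> onto_distortion_le X M \<phi> D'"
  unfolding onto_distortion_le_def by force

lemma s_inv_le_mdist:
  "m \<in> mspace M \<Longrightarrow> m' \<in> mspace M \<Longrightarrow> m \<noteq> m' \<Longrightarrow> s_inv M \<le> mdist M m m'"
  unfolding s_inv_def by (rule cInf_lower) (auto intro!: bdd_belowI[where m=0])

lemma dis_le:
  assumes "mspace M \<noteq> {}"
    and "\<And>m m'. m \<in> mspace M \<Longrightarrow> m' \<in> mspace M \<Longrightarrow> \<bar>mdist M m m' - mdist M (\<sigma> m) (\<sigma> m')\<bar> \<le> K"
  shows "dis M \<sigma> \<le> K"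
  unfolding dis_def by (rule cSUP_least) (use assms in auto)

lemma dis_nonneg:
  assumes "finite (mspace M)" "mspace M \<noteq> {}"
  shows "0 \<le> dis M \<sigma>"
proof -
  obtain m where m: "m \<in> mspace M" using assms(2) by blast
  have "bdd_above ((\<lambda>p. \<bar>mdist M (fst p) (snd p) - mdist M (\<sigma> (fst p)) (\<sigma> (snd p))\<bar>) ` (mspace M \<times> mspace M))"
    using assms(1) by simp
  hence "\<bar>mdist M m m - mdist M (\<sigma> m) (\<sigma> m)\<bar> \<le> dis M \<sigma>"
    unfolding dis_def using m by (metis (no_types, lifting) SigmaI cSUP_upper fst_conv snd_conv)
  thus ?thesis by linarith
qed

lemma e_inv_le_dis:
  assumes "finite (mspace M)" "bij_betw \<sigma> (mspace M) (mspace M)" "m \<in> mspace M" "\<sigma> m \<noteq> m"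
  shows "e_inv M \<le> dis M \<sigma>"
  unfolding e_inv_def
proof (rule cInf_lower)
  show "dis M \<sigma> \<in> {dis M f |f. bij_betw f (mspace M) (mspace M) \<and> (\<exists>x\<in>mspace M. f x \<noteq> x)}"
    using assms by blast
  show "bdd_below {dis M f |f. bij_betw f (mspace M) (mspace M) \<and> (\<exists>x\<in>mspace M. f x \<noteq> x)}"
    using dis_nonneg[OF assms(1)] assms(3) by (auto intro!: bdd_belowI[where m=0])
qed

text \<open>If \<open>\<phi>\<close> and \<open>\<psi>\<close> both qualify, \<open>\<psi> \<circ> \<phi>\<^sup>-\<^sup>1\<close> (for any right inverse of \<open>\<phi>\<close>) is
  injective because \<open>s(M) > 2D\<close>, hence a permutation of the finite set \<open>M\<close> with distortion
  \<open>\<le> 2D < e(M)\<close>, hence the identity.\<close>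

lemma onto_distortion_unique:
  assumes fin: "finite (mspace M)"
    and \<phi>: "onto_distortion_le X M \<phi> D" and \<psi>: "onto_distortion_le X M \<psi> D"
    and D: "2*D < s_inv M" "2*D < e_inv M" and x0: "x0 \<in> mspace X"
  shows "\<phi> x0 = \<psi> x0"
proof -
  note \<phi>D = onto_distortion_leD[OF \<phi>] and \<psi>D = onto_distortion_leD[OF \<psi>]
  define sel where "sel m = (if m = \<phi> x0 then x0 else (SOME x. x \<in> mspace X \<and> \<phi> x = m))" for m
  have sel: "sel m \<in> mspace X \<and> \<phi> (sel m) = m" if "m \<in> mspace M" for m
    using x0 someI_ex[OF \<phi>D(2)[OF that, unfolded Bex_def]] unfolding sel_def by auto
  define \<sigma> where "\<sigma> m = \<psi> (sel m)" for m
  have \<sigma>_dist: "\<bar>mdist M m m' - mdist M (\<sigma> m) (\<sigma> m')\<bar> \<le> 2*D"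
    if "m \<in> mspace M" "m' \<in> mspace M" for m m'
  proof -
    have "\<bar>mdist X (sel m) (sel m') - mdist M m m'\<bar> \<le> D"
      using \<phi>D(3)[of "sel m" "sel m'"] sel that by simp
    moreover have "\<bar>mdist X (sel m) (sel m') - mdist M (\<sigma> m) (\<sigma> m')\<bar> \<le> D"
      using \<psi>D(3)[of "sel m" "sel m'"] sel that unfolding \<sigma>_def by simp
    ultimately show ?thesis by linarith
  qed
  have \<sigma>M: "\<sigma> ` mspace M \<subseteq> mspace M" using sel \<psi>D(1) unfolding \<sigma>_def by auto
  have "inj_on \<sigma> (mspace M)"
  proof (rule inj_onI, rule ccontr)
    fix m m' assume m: "m \<in> mspace M" "m' \<in> mspace M" "\<sigma> m = \<sigma> m'" "m \<noteq> m'"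
    have "\<sigma> m \<in> mspace M" using \<sigma>M m(1) by auto
    hence "mdist M m m' \<le> 2*D" using \<sigma>_dist[OF m(1,2)] m(3) by simp
    thus False using s_inv_le_mdist[OF m(1,2,4)] D by linarith
  qed
  hence bij: "bij_betw \<sigma> (mspace M) (mspace M)"
    unfolding bij_betw_def using endo_inj_surj[OF fin \<sigma>M] by simp
  have "dis M \<sigma> \<le> 2*D" using \<sigma>_dist \<phi>D(1)[OF x0] by (intro dis_le) auto
  hence "\<sigma> m = m" if "m \<in> mspace M" for m
    using e_inv_le_dis[OF fin bij that] D by fastforce
  hence "\<sigma> (\<phi> x0) = \<phi> x0" using \<phi>D(1)[OF x0] by blast
  thus ?thesis unfolding \<sigma>_def sel_def by simp
qed

lemma dGH_le_onto_distortion: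
  assumes "cms M" "cms X" "onto_distortion_le X M \<phi> (2*c)" "0 \<le> c"
  shows "dGH M X \<le> c"
proof (rule dGH_le_correspondence[where R="{(\<phi> x, x) | x. x \<in> mspace X}"])
  show "correspondence {(\<phi> x, x) | x. x \<in> mspace X} M X"
    using onto_distortion_leD[OF assms(3)] unfolding correspondence_def by blast
  show "distortion_le {(\<phi> x, x) | x. x \<in> mspace X} M X (2*c)"
    using onto_distortion_leD(3)[OF assms(3)] unfolding distortion_le_def by (auto simp: abs_minus_commute)
qed (use assms in auto)

text \<open>When \<open>2\<rho> < s(M)\<close>, a correspondence relates each point of \<open>X\<close> to a single point of \<open>M\<close>.\<close>

lemma dGH_less_imp_onto_distortion:
  assumes "cms M" "cms X" "dGH M X < \<rho>" "2*\<rho> < s_inv M"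
  obtains \<psi> where "onto_distortion_le X M \<psi> (2*\<rho>)"
proof -
  obtain R where "correspondence R M X" and R: "distortion_le R M X (2*\<rho>)"
    using dGH_less_imp_correspondence[OF assms(1-3)] .
  hence R_sub: "R \<subseteq> mspace M \<times> mspace X" and
    R_left: "\<forall>m\<in>mspace M. \<exists>x. (m,x) \<in> R" and R_right: "\<forall>x\<in>mspace X. \<exists>m. (m,x) \<in> R"
    unfolding correspondence_def by auto
  have R_dist: "\<bar>mdist M m m' - mdist X x x'\<bar> \<le> 2*\<rho>" if "(m,x) \<in> R" "(m',x') \<in> R" for m m' x x'
    using R that unfolding distortion_le_def by fast
  define \<psi> where "\<psi> x = (SOME m. (m,x) \<in> R)" for x
  have \<psi>R: "(\<psi> x, x) \<in> R" if "x \<in> mspace X" for x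
    unfolding \<psi>_def using R_right that by (metis someI_ex)
  have unique: "m = m'" if "(m,x) \<in> R" "(m',x) \<in> R" for m m' x
  proof (rule ccontr)
    assume "m \<noteq> m'"
    have "m \<in> mspace M" "m' \<in> mspace M" "x \<in> mspace X" using that R_sub by auto
    hence "mdist M m m' \<le> 2*\<rho>" using R_dist[OF that] by simp
    thus False using s_inv_le_mdist[OF \<open>m \<in> mspace M\<close> \<open>m' \<in> mspace M\<close> \<open>m \<noteq> m'\<close>] assms(4) by linarith
  qed
  have "\<psi> ` mspace X = mspace M"
  proof
    show "\<psi> ` mspace X \<subseteq> mspace M" using \<psi>R R_sub by blast
    show "mspace M \<subseteq> \<psi> ` mspace X"
    proof
      fix m assume "m \<in> mspace M"
      then obtain x where x: "(m,x) \<in> R" using R_left by blast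
      hence "x \<in> mspace X" using R_sub by auto
      thus "m \<in> \<psi> ` mspace X" using unique[OF \<psi>R x] by blast
    qed
  qed
  moreover have "\<bar>mdist X x x' - mdist M (\<psi> x) (\<psi> x')\<bar> \<le> 2*\<rho>"
    if "x \<in> mspace X" "x' \<in> mspace X" for x x'
    using R_dist[OF \<psi>R[OF that(1)] \<psi>R[OF that(2)]] by (simp add: abs_minus_commute)
  ultimately show thesis using that unfolding onto_distortion_le_def by blast
qed

locale GH_sphere =
  fixes M :: mspc and r :: real
  assumes finite_M: "finite (mspace M)" and M_nonempty: "mspace M \<noteq> {}" and r_pos: "0 < r"
    and r_s_inv: "4*r < s_inv M" and r_e_inv: "4*r < e_inv M"
begin

lemma cms_M: "cms M"
  using finite_imp_compactin[OF _ finite_M, of "mtopology_of M"] M_nonempty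
  unfolding cms_def compact_space_def by simp

lemma dGH_ge_if_distortion_attained:
  assumes X: "cms X" and \<phi>: "onto_distortion_le X M \<phi> (2*r)"
    and attained: "\<And>\<rho>. \<rho> < r \<Longrightarrow> \<exists>x\<in>mspace X. \<exists>x'\<in>mspace X.
                      2*\<rho> < \<bar>mdist X x x' - mdist M (\<phi> x) (\<phi> x')\<bar>"
  shows "r \<le> dGH M X"
proof (rule ccontr)
  assume "\<not> r \<le> dGH M X"
  define \<rho> where "\<rho> = (dGH M X + r) / 2"
  have \<rho>: "dGH M X < \<rho>" "\<rho> < r" using \<open>\<not> r \<le> dGH M X\<close> unfolding \<rho>_def by auto
  obtain \<psi> where \<psi>: "onto_distortion_le X M \<psi> (2*\<rho>)"
    using dGH_less_imp_onto_distortion[OF cms_M X \<rho>(1)] \<rho>(2) r_s_inv r_pos by fastforce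
  have "\<phi> x = \<psi> x" if "x \<in> mspace X" for x
    using onto_distortion_unique[OF finite_M \<phi> onto_distortion_le_mono[OF \<psi>] _ _ that]
      \<rho>(2) r_pos r_s_inv r_e_inv by simp
  thus False
    using attained[OF \<rho>(2)] onto_distortion_leD(3)[OF \<psi>] by fastforce
qed

lemma distortion_attained_if_dGH_eq:
  assumes X: "cms X" and d: "dGH M X = r" and \<phi>: "onto_distortion_le X M \<phi> (2*r)" and "\<rho> < r"
  shows "\<exists>x\<in>mspace X. \<exists>x'\<in>mspace X. 2*\<rho> < \<bar>mdist X x x' - mdist M (\<phi> x) (\<phi> x')\<bar>"
proof (rule ccontr)
  assume "\<not> ?thesis"
  hence "onto_distortion_le X M \<phi> (2 * max \<rho> 0)"
    using \<phi> unfolding onto_distortion_le_def by force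
  hence "dGH M X \<le> max \<rho> 0" using dGH_le_onto_distortion[OF cms_M X] by simp
  thus False using d \<open>\<rho> < r\<close> r_pos by linarith
qed

text \<open>Maps of distortion \<open>2\<rho>\<close> exist for every \<open>\<rho> > r\<close> and are unique once \<open>\<rho>\<close> is close to \<open>r\<close>;
  so a single map has distortion \<open>\<le> 2\<rho>\<close> for all such \<open>\<rho>\<close>.\<close>

lemma onto_distortion_if_dGH_eq:
  assumes X: "cms X" and d: "dGH M X = r"
  obtains \<phi> where "onto_distortion_le X M \<phi> (2*r)"
proof -
  define \<rho>0 where "\<rho>0 = (r + min (s_inv M / 4) (e_inv M / 4)) / 2"
  have \<rho>0: "r < \<rho>0" "4*\<rho>0 < s_inv M" "4*\<rho>0 < e_inv M"
    using r_s_inv r_e_inv unfolding \<rho>0_def by auto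
  have ex: "\<exists>\<psi>. onto_distortion_le X M \<psi> (2*\<rho>)" if "r < \<rho>" "\<rho> \<le> \<rho>0" for \<rho>
    using dGH_less_imp_onto_distortion[OF cms_M X, of \<rho>] d that \<rho>0 r_pos by fastforce
  then obtain \<phi> where \<phi>: "onto_distortion_le X M \<phi> (2*\<rho>0)" using \<rho>0 by blast
  have "\<bar>mdist X x x' - mdist M (\<phi> x) (\<phi> x')\<bar> / 2 \<le> r" if "x \<in> mspace X" "x' \<in> mspace X" for x x'
  proof (rule dense_ge_bounded[OF \<rho>0(1)])
    fix \<rho> assume \<rho>: "r < \<rho>" "\<rho> < \<rho>0"
    then obtain \<psi> where \<psi>: "onto_distortion_le X M \<psi> (2*\<rho>)" using ex by fastforce
    have "\<phi> y = \<psi> y" if "y \<in> mspace X" for y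
      using onto_distortion_unique[OF finite_M \<phi> onto_distortion_le_mono[OF \<psi>] _ _ that] \<rho> \<rho>0
      by simp
    thus "\<bar>mdist X x x' - mdist M (\<phi> x) (\<phi> x')\<bar> / 2 \<le> \<rho>"
      using onto_distortion_leD(3)[OF \<psi> that] that by simp
  qed
  hence "onto_distortion_le X M \<phi> (2*r)"
    using \<phi> unfolding onto_distortion_le_def by fastforce
  thus thesis by (rule that)
qed

end

section \<open>The twin space\<close>

text \<open>Every path below ends at the space obtained from \<open>M\<close> by doubling one point at
  distance \<open>2r\<close>; the twin is a fresh real number.\<close>

context GH_sphere
begin

definition base_point :: real where "base_point = (SOME m. m \<in> mspace M)"
definition twin_point :: real where "twin_point = (SOME z. z \<notin> mspace M)"
definition twin_carrier :: "real set" where "twin_carrier = insert twin_point (mspace M)"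
definition twin_proj :: "real \<Rightarrow> real" where
  "twin_proj a = (if a = twin_point then base_point else a)"
definition twin_dist :: "real \<Rightarrow> real \<Rightarrow> real" where
  "twin_dist a b = (if a = b then 0 else
     mdist M (twin_proj a) (twin_proj b) + (if twin_proj a = twin_proj b then 2*r else 0))"

lemma base_point_in_M: "base_point \<in> mspace M"
  unfolding base_point_def using M_nonempty by (simp add: some_in_eq)

lemma twin_point_notin_M: "twin_point \<notin> mspace M"
  unfolding twin_point_def using ex_new_if_finite[OF infinite_UNIV_char_0 finite_M] by (rule someI_ex)

lemma twin_proj_in_M: "a \<in> twin_carrier \<Longrightarrow> twin_proj a \<in> mspace M"
  unfolding twin_carrier_def twin_proj_def using base_point_in_M by auto

lemma twin_proj_id: "a \<in> mspace M \<Longrightarrow> twin_proj a = a"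
  unfolding twin_proj_def using twin_point_notin_M by auto

lemma twin_proj_eq_other:
  assumes "a \<in> twin_carrier" "c \<in> twin_carrier" "a \<noteq> c" "twin_proj a = twin_proj c"
    "b \<in> twin_carrier" "b \<noteq> a" "b \<noteq> c"
  shows "twin_proj b \<noteq> twin_proj a"
proof -
  have "(a = twin_point \<and> c = base_point) \<or> (a = base_point \<and> c = twin_point)"
    using assms(1-4) unfolding twin_carrier_def twin_proj_def by (auto split: if_splits)
  thus ?thesis using assms(5-7) twin_point_notin_M unfolding twin_carrier_def twin_proj_def by auto
qed

lemma twin_dist_self [simp]: "twin_dist a a = 0"
  unfolding twin_dist_def by simp

lemma twin_dist_nonneg: "0 \<le> twin_dist a b"
  unfolding twin_dist_def using r_pos by auto

lemma twin_dist_ge: "a \<in> twin_carrier \<Longrightarrow> mdist M (twin_proj a) (twin_proj b) \<le> twin_dist a b"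
  unfolding twin_dist_def using r_pos twin_proj_in_M by auto

lemma twin_dist_le: "a \<in> twin_carrier \<Longrightarrow> twin_dist a b \<le> mdist M (twin_proj a) (twin_proj b) + 2*r"
  unfolding twin_dist_def using r_pos twin_proj_in_M by auto

lemma twin_dist_eq: "twin_proj a \<noteq> twin_proj b \<Longrightarrow> twin_dist a b = mdist M (twin_proj a) (twin_proj b)"
  unfolding twin_dist_def by auto

lemma twin_dist_twin_base: "twin_dist twin_point base_point = 2*r"
  using twin_point_notin_M base_point_in_M twin_proj_id unfolding twin_dist_def twin_proj_def by auto

text \<open>The triangle inequality through a third point uses \<open>2r \<le> s(M)\<close>.\<close>

lemma twin_dist_metric: "Metric_space twin_carrier twin_dist"
proof
  show "0 \<le> twin_dist x y" for x y by (rule twin_dist_nonneg)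
  show "twin_dist x y = twin_dist y x" for x y
    unfolding twin_dist_def using mdist_commute[of M "twin_proj x" "twin_proj y"] by auto
  show "(twin_dist x y = 0) = (x = y)" if "x \<in> twin_carrier" "y \<in> twin_carrier" for x y
    using that twin_proj_in_M r_pos mdist_zero[of "twin_proj x" M "twin_proj y"] unfolding twin_dist_def
    by (auto split: if_splits)
  show "twin_dist x z \<le> twin_dist x y + twin_dist y z"
    if xyz: "x \<in> twin_carrier" "y \<in> twin_carrier" "z \<in> twin_carrier" for x y z
  proof (cases "x = z \<or> y = x \<or> y = z")
    case True thus ?thesis using twin_dist_nonneg[of x y] twin_dist_nonneg[of y z] by auto
  next
    case False
    show ?thesis
    proof (cases "twin_proj x = twin_proj z")
      case False
      hence "twin_dist x z = mdist M (twin_proj x) (twin_proj z)" by (rule twin_dist_eq)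
      also have "\<dots> \<le> mdist M (twin_proj x) (twin_proj y) + mdist M (twin_proj y) (twin_proj z)"
        using mdist_triangle twin_proj_in_M xyz by metis
      also have "\<dots> \<le> twin_dist x y + twin_dist y z"
        using twin_dist_ge[OF xyz(1), of y] twin_dist_ge[OF xyz(2), of z] by simp
      finally show ?thesis .
    next
      case True
      hence "twin_proj y \<noteq> twin_proj x" using twin_proj_eq_other xyz False by blast
      hence "s_inv M \<le> twin_dist x y"
        using s_inv_le_mdist twin_proj_in_M xyz twin_dist_ge[OF xyz(1), of y] by (metis order_trans)
      moreover have "twin_dist x z \<le> 2*r"
        using twin_dist_le[OF xyz(1), of z] True twin_proj_in_M[OF xyz(3)] by simp
      ultimately show ?thesis using twin_dist_nonneg[of y z] r_s_inv r_pos by linarith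
    qed
  qed
qed

definition twin_space :: mspc where "twin_space = metric (twin_carrier, twin_dist)"

lemma mspace_twin_space [simp]: "mspace twin_space = twin_carrier"
  and mdist_twin_space [simp]: "mdist twin_space = twin_dist"
proof -
  interpret Metric_space twin_carrier twin_dist by (rule twin_dist_metric)
  show "mspace twin_space = twin_carrier" "mdist twin_space = twin_dist" by (simp_all add: twin_space_def)
qed

lemma finite_twin_carrier: "finite twin_carrier"
  unfolding twin_carrier_def using finite_M by simp

lemma cms_twin_space: "cms twin_space"
  using finite_imp_compactin[OF _ finite_twin_carrier, of "mtopology_of twin_space"]
  unfolding cms_def compact_space_def by (simp add: twin_carrier_def)

lemma onto_distortion_twin_proj: "onto_distortion_le twin_space M twin_proj (2*r)"
  unfolding onto_distortion_le_def
proof (intro conjI ballI)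
  show "twin_proj ` mspace twin_space = mspace M"
    using twin_proj_in_M twin_proj_id unfolding mspace_twin_space twin_carrier_def by force
  fix x x' assume "x \<in> mspace twin_space" "x' \<in> mspace twin_space"
  thus "\<bar>mdist twin_space x x' - mdist M (twin_proj x) (twin_proj x')\<bar> \<le> 2*r"
    using twin_dist_ge[of x x'] twin_dist_le[of x x'] by auto
qed

lemma twin_points_distortion:
  "\<bar>mdist twin_space twin_point base_point - mdist M (twin_proj twin_point) (twin_proj base_point)\<bar> = 2*r"
  using twin_dist_twin_base base_point_in_M twin_proj_id r_pos by (simp add: twin_proj_def)

lemma twin_points_in_carrier: "twin_point \<in> twin_carrier" "base_point \<in> twin_carrier"
  unfolding twin_carrier_def using base_point_in_M by auto

lemma dGH_twin_space: "dGH M twin_space = r"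
proof (rule antisym)
  show "dGH M twin_space \<le> r"
    using dGH_le_onto_distortion[OF cms_M cms_twin_space onto_distortion_twin_proj] r_pos by simp
  show "r \<le> dGH M twin_space"
    using twin_points_distortion twin_points_in_carrier
    by (intro dGH_ge_if_distortion_attained[OF cms_twin_space onto_distortion_twin_proj]) force
qed

end

section \<open>A path from a space on the sphere to the twin space\<close>

definition pseudometric_on :: "'a set \<Rightarrow> ('a \<Rightarrow> 'a \<Rightarrow> real) \<Rightarrow> bool" where
  "pseudometric_on S e \<longleftrightarrow> (\<forall>u v. 0 \<le> e u v \<and> e u v = e v u) \<and> (\<forall>u\<in>S. e u u = 0) \<and>
     (\<forall>u\<in>S. \<forall>v\<in>S. \<forall>w\<in>S. e u w \<le> e u v + e v w)"

lemma pseudometric_on_pullback: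
  "Metric_space T d \<Longrightarrow> f ` S \<subseteq> T \<Longrightarrow> pseudometric_on S (\<lambda>u v. d (f u) (f v))"
  unfolding pseudometric_on_def
  by (auto simp: Metric_space.commute Metric_space.nonneg Metric_space.mdist_zero image_subset_iff
      intro: Metric_space.triangle)

lemma Metric_space_add_pseudometrics:
  assumes "Metric_space S d" "pseudometric_on S e1" "pseudometric_on S e2"
    and "0 < a" "0 \<le> b" "0 \<le> c"
  shows "Metric_space S (\<lambda>u v. a * d u v + b * e1 u v + c * e2 u v)"
proof -
  interpret Metric_space S d by fact
  have e1: "\<And>u v. 0 \<le> e1 u v" "\<And>u v. e1 u v = e1 v u" "\<And>u. u\<in>S \<Longrightarrow> e1 u u = 0"
    "\<And>u v w. u\<in>S \<Longrightarrow> v\<in>S \<Longrightarrow> w\<in>S \<Longrightarrow> e1 u w \<le> e1 u v + e1 v w"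
    using assms(2) unfolding pseudometric_on_def by auto
  have e2: "\<And>u v. 0 \<le> e2 u v" "\<And>u v. e2 u v = e2 v u" "\<And>u. u\<in>S \<Longrightarrow> e2 u u = 0"
    "\<And>u v w. u\<in>S \<Longrightarrow> v\<in>S \<Longrightarrow> w\<in>S \<Longrightarrow> e2 u w \<le> e2 u v + e2 v w"
    using assms(3) unfolding pseudometric_on_def by auto
  show ?thesis
  proof
    show "0 \<le> a * d x y + b * e1 x y + c * e2 x y" for x y
      using assms(4-6) e1(1)[of x y] e2(1)[of x y] by simp
    show "a * d x y + b * e1 x y + c * e2 x y = a * d y x + b * e1 y x + c * e2 y x" for x y
      using commute[of x y] e1(2)[of x y] e2(2)[of x y] by simp
    show "(a * d x y + b * e1 x y + c * e2 x y = 0) = (x = y)" if "x \<in> S" "y \<in> S" for x y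
    proof
      assume h: "a * d x y + b * e1 x y + c * e2 x y = 0"
      have "0 \<le> b * e1 x y" "0 \<le> c * e2 x y" "0 \<le> a * d x y"
        using assms(4-6) e1(1)[of x y] e2(1)[of x y] by simp_all
      hence "a * d x y = 0" using h by linarith
      hence "d x y = 0" using assms(4) by simp
      thus "x = y" using that by simp
    qed (use that e1(3) e2(3) in simp)
    show "a * d x z + b * e1 x z + c * e2 x z \<le>
        (a * d x y + b * e1 x y + c * e2 x y) + (a * d y z + b * e1 y z + c * e2 y z)"
      if "x \<in> S" "y \<in> S" "z \<in> S" for x y z
    proof -
      have "a * d x z \<le> a * (d x y + d y z)" using triangle[OF that] assms(4) by simp
      moreover have "b * e1 x z \<le> b * (e1 x y + e1 y z)" using e1(4)[OF that] assms(5) by (simp add: mult_left_mono)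
      moreover have "c * e2 x z \<le> c * (e2 x y + e2 y z)" using e2(4)[OF that] assms(6) by (simp add: mult_left_mono)
      ultimately show ?thesis by (simp add: algebra_simps)
    qed
  qed
qed

text \<open>Weights of the three metrics along the path: the pulled-back metric of the starting
  space fades out on \<open>[0, 1/2]\<close>, the pulled-back metric of the twin space fades in on
  \<open>[1/2, 1]\<close>, and the glued metric takes up the rest.\<close>

definition left_weight :: "real \<Rightarrow> real" where "left_weight t = max 0 (1 - 2*t)"
definition right_weight :: "real \<Rightarrow> real" where "right_weight t = max 0 (2*t - 1)"
definition glue_weight :: "real \<Rightarrow> real" where "glue_weight t = 1 - left_weight t - right_weight t"

lemma weights_nonneg:
  assumes "0 \<le> t" "t \<le> 1"
  shows "0 \<le> glue_weight t" "0 \<le> left_weight t" "0 \<le> right_weight t"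
  using assms unfolding glue_weight_def left_weight_def right_weight_def by (auto simp: max_def)

lemma weights_sum: "glue_weight t + left_weight t + right_weight t = 1"
  unfolding glue_weight_def by simp

lemma glue_weight_pos: "0 < t \<Longrightarrow> t < 1 \<Longrightarrow> 0 < glue_weight t"
  unfolding glue_weight_def left_weight_def right_weight_def by (auto simp: max_def)

lemma weights_0: "glue_weight 0 = 0" "left_weight 0 = 1" "right_weight 0 = 0"
  and weights_1: "glue_weight 1 = 0" "left_weight 1 = 0" "right_weight 1 = 1"
  unfolding glue_weight_def left_weight_def right_weight_def by auto

lemma right_weight_eq_0: "t \<le> 1/2 \<Longrightarrow> right_weight t = 0"
  and left_weight_eq_0: "1/2 \<le> t \<Longrightarrow> left_weight t = 0"
  unfolding left_weight_def right_weight_def by auto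

lemma weights_lipschitz:
  "\<bar>left_weight t - left_weight t'\<bar> \<le> 2*\<bar>t - t'\<bar>" "\<bar>right_weight t - right_weight t'\<bar> \<le> 2*\<bar>t - t'\<bar>"
  unfolding left_weight_def right_weight_def by (auto simp: max_def abs_if)

locale sphere_path = GH_sphere +
  fixes P :: mspc and \<phi> :: "real \<Rightarrow> real"
  assumes cms_P: "cms P" and dGH_P: "dGH M P = r" and \<phi>: "onto_distortion_le P M \<phi> (2*r)"
begin

lemma \<phi>_in_M: "x \<in> mspace P \<Longrightarrow> \<phi> x \<in> mspace M"
  and \<phi>_surj: "m \<in> mspace M \<Longrightarrow> \<exists>x\<in>mspace P. \<phi> x = m"
  and \<phi>_distortion: "x \<in> mspace P \<Longrightarrow> x' \<in> mspace P \<Longrightarrow> \<bar>mdist P x x' - mdist M (\<phi> x) (\<phi> x')\<bar> \<le> 2*r"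
  using onto_distortion_leD[OF \<phi>] by auto

definition section_P :: "real \<Rightarrow> real" where "section_P m = (SOME x. x \<in> mspace P \<and> \<phi> x = m)"

lemma section_P: "m \<in> mspace M \<Longrightarrow> section_P m \<in> mspace P \<and> \<phi> (section_P m) = m"
  unfolding section_P_def by (rule someI_ex) (use \<phi>_surj in blast)

lemma \<phi>_in_twin_carrier: "x \<in> mspace P \<Longrightarrow> \<phi> x \<in> twin_carrier"
  and twin_proj_\<phi>: "x \<in> mspace P \<Longrightarrow> twin_proj (\<phi> x) = \<phi> x"
  using \<phi>_in_M twin_proj_id unfolding twin_carrier_def by auto

lemma \<phi>_eq_if_close:
  assumes "x \<in> mspace P" "x' \<in> mspace P" "mdist P x x' < s_inv M - 2*r"
  shows "\<phi> x = \<phi> x'"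
proof (rule ccontr)
  assume "\<phi> x \<noteq> \<phi> x'"
  hence "s_inv M \<le> mdist M (\<phi> x) (\<phi> x')"
    using s_inv_le_mdist[OF \<phi>_in_M[OF assms(1)] \<phi>_in_M[OF assms(2)]] by simp
  thus False using \<phi>_distortion[OF assms(1,2)] assms(3) by linarith
qed

definition glue_rel :: "(real \<times> real) set" where
  "glue_rel = {(x,a). x \<in> mspace P \<and> a \<in> twin_carrier \<and> \<phi> x = twin_proj a}"

lemma glue_rel_distortion: "distortion_le glue_rel P twin_space (2*r)"
  unfolding distortion_le_def
proof clarify
  fix x a x' a' assume "(x,a) \<in> glue_rel" "(x',a') \<in> glue_rel"
  hence h: "x \<in> mspace P" "a \<in> twin_carrier" "\<phi> x = twin_proj a"
    "x' \<in> mspace P" "a' \<in> twin_carrier" "\<phi> x' = twin_proj a'"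
    unfolding glue_rel_def by auto
  have P: "\<bar>mdist P x x' - mdist M (twin_proj a) (twin_proj a')\<bar> \<le> 2*r"
    using \<phi>_distortion[OF h(1,4)] h by simp
  show "\<bar>mdist P x x' - mdist twin_space a a'\<bar> \<le> 2*r"
  proof (cases "twin_proj a = twin_proj a'")
    case True
    hence "mdist twin_space a a' \<in> {0, 2*r}" "0 \<le> mdist P x x'" "mdist P x x' \<le> 2*r"
      using P twin_proj_in_M[OF h(2)] unfolding mdist_twin_space twin_dist_def by auto
    thus ?thesis using r_pos by auto
  next
    case False
    thus ?thesis using P twin_dist_eq by simp
  qed
qed

sublocale gluing P twin_space glue_rel r
proof
  obtain x0 where "x0 \<in> mspace P" using cms_P unfolding cms_def by blast
  hence "(x0, \<phi> x0) \<in> glue_rel" unfolding glue_rel_def using \<phi>_in_twin_carrier twin_proj_\<phi> by auto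
  thus "glue_rel \<noteq> {}" by blast
qed (use r_pos glue_rel_distortion in \<open>auto simp: glue_rel_def\<close>)

abbreviation "carrier \<equiv> mspace P <+> twin_carrier"
abbreviation "glued \<equiv> glue_dist P twin_space glue_rel r"

lemma glued_metric: "Metric_space carrier glued"
  using glue_dist_metric by simp

lemma glue_cross_distortion:
  assumes x: "x \<in> mspace P" and a: "a \<in> twin_carrier"
  shows "\<bar>C x a - mdist M (\<phi> x) (twin_proj a)\<bar> \<le> 2*r"
proof -
  define a' where "a' = (if twin_proj a = \<phi> x then a else \<phi> x)"
  have a'R: "(x, a') \<in> glue_rel"
    unfolding glue_rel_def a'_def using x a \<phi>_in_twin_carrier twin_proj_\<phi> by auto
  have "twin_dist a' a \<le> mdist M (\<phi> x) (twin_proj a)"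
    using twin_dist_eq[of a' a] twin_proj_\<phi>[OF x] unfolding a'_def by (cases "twin_proj a = \<phi> x") auto
  hence up: "C x a \<le> r + mdist M (\<phi> x) (twin_proj a)"
    using glue_cross_le[OF _ a'R, of r P twin_space x a] x r_pos by simp
  have lo: "mdist M (\<phi> x) (twin_proj a) - r \<le> C x a"
  proof (rule glue_cross_ge[OF R_nonempty])
    fix x' a'' assume "(x', a'') \<in> glue_rel"
    hence h: "x' \<in> mspace P" "a'' \<in> twin_carrier" "\<phi> x' = twin_proj a''" unfolding glue_rel_def by auto
    have "mdist M (\<phi> x) (\<phi> x') - 2*r \<le> mdist P x x'" using \<phi>_distortion[OF x h(1)] by linarith
    moreover have "mdist M (\<phi> x') (twin_proj a) \<le> twin_dist a'' a" using twin_dist_ge[OF h(2), of a] h(3) by simp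
    moreover have "mdist M (\<phi> x) (twin_proj a) \<le> mdist M (\<phi> x) (\<phi> x') + mdist M (\<phi> x') (twin_proj a)"
      using mdist_triangle \<phi>_in_M[OF x] \<phi>_in_M[OF h(1)] twin_proj_in_M[OF a] by metis
    ultimately show "mdist M (\<phi> x) (twin_proj a) - r \<le> mdist P x x' + r + mdist twin_space a'' a" by simp
  qed
  show ?thesis using up lo r_pos by linarith
qed

text \<open>Each point of the disjoint union lies over a point of \<open>M\<close>, and can be moved into either
  of the two spaces without changing it.\<close>

definition to_M :: "real + real \<Rightarrow> real" where
  "to_M u = (case u of Inl x \<Rightarrow> \<phi> x | Inr a \<Rightarrow> twin_proj a)"
definition to_P :: "real + real \<Rightarrow> real" where
  "to_P u = (case u of Inl x \<Rightarrow> x | Inr a \<Rightarrow> section_P (twin_proj a))"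
definition to_T :: "real + real \<Rightarrow> real" where
  "to_T u = (case u of Inl x \<Rightarrow> \<phi> x | Inr a \<Rightarrow> a)"

definition P_pull :: "real + real \<Rightarrow> real + real \<Rightarrow> real" where
  "P_pull u v = mdist P (to_P u) (to_P v)"
definition T_pull :: "real + real \<Rightarrow> real + real \<Rightarrow> real" where
  "T_pull u v = twin_dist (to_T u) (to_T v)"

lemma to_P: "u \<in> carrier \<Longrightarrow> to_P u \<in> mspace P \<and> \<phi> (to_P u) = to_M u"
  unfolding to_P_def to_M_def using section_P twin_proj_in_M by (auto split: sum.splits)

lemma to_T: "u \<in> carrier \<Longrightarrow> to_T u \<in> twin_carrier \<and> twin_proj (to_T u) = to_M u"
  unfolding to_T_def to_M_def using \<phi>_in_twin_carrier twin_proj_\<phi> by (auto split: sum.splits)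

lemma to_M_in_M: "u \<in> carrier \<Longrightarrow> to_M u \<in> mspace M"
  using to_T twin_proj_in_M by metis

lemma glued_distortion:
  "u \<in> carrier \<Longrightarrow> v \<in> carrier \<Longrightarrow> \<bar>glued u v - mdist M (to_M u) (to_M v)\<bar> \<le> 2*r"
  using \<phi>_distortion glue_cross_distortion onto_distortion_leD(3)[OF onto_distortion_twin_proj]
  by (cases u; cases v) (auto simp: to_M_def mdist_commute)

lemma P_pull_distortion:
  "u \<in> carrier \<Longrightarrow> v \<in> carrier \<Longrightarrow> \<bar>P_pull u v - mdist M (to_M u) (to_M v)\<bar> \<le> 2*r"
  unfolding P_pull_def using \<phi>_distortion to_P by metis

lemma T_pull_distortion:
  "u \<in> carrier \<Longrightarrow> v \<in> carrier \<Longrightarrow> \<bar>T_pull u v - mdist M (to_M u) (to_M v)\<bar> \<le> 2*r"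
  unfolding T_pull_def using onto_distortion_leD(3)[OF onto_distortion_twin_proj] to_T
  by (metis mdist_twin_space mspace_twin_space)

definition path_dist :: "real \<Rightarrow> real + real \<Rightarrow> real + real \<Rightarrow> real" where
  "path_dist t u v = glue_weight t * glued u v + left_weight t * P_pull u v + right_weight t * T_pull u v"

definition path_space :: "real \<Rightarrow> mspc" where
  "path_space t = (if t = 0 then P else if t = 1 then twin_space else encode_metric carrier (path_dist t))"

definition path_point :: "real \<Rightarrow> real + real \<Rightarrow> real" where
  "path_point t u = (if t = 0 then to_P u else if t = 1 then to_T u else sum_to_real u)"

lemma pseudometric_P_pull: "pseudometric_on carrier P_pull"
  unfolding P_pull_def[abs_def]
  by (rule pseudometric_on_pullback[OF Metric_space_mspace_mdist]) (use to_P in blast)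

lemma pseudometric_T_pull: "pseudometric_on carrier T_pull"
  unfolding T_pull_def[abs_def]
  by (rule pseudometric_on_pullback[OF twin_dist_metric]) (use to_T in blast)

lemma path_dist_metric: "0 < t \<Longrightarrow> t < 1 \<Longrightarrow> Metric_space carrier (path_dist t)"
  unfolding path_dist_def[abs_def]
  using glued_metric pseudometric_P_pull pseudometric_T_pull glue_weight_pos weights_nonneg[of t]
  by (intro Metric_space_add_pseudometrics) auto

lemma path_space_0: "path_space 0 = P" and path_space_1: "path_space 1 = twin_space"
  unfolding path_space_def by auto

lemma
  assumes "0 < t" "t < 1"
  shows mspace_path_space: "mspace (path_space t) = sum_to_real ` carrier"
    and mdist_path_space: "mdist (path_space t) (sum_to_real u) (sum_to_real v) = path_dist t u v"
  using assms path_dist_metric[OF assms]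
  by (simp_all add: path_space_def mspace_encode_metric)

lemma path_point:
  assumes "0 \<le> t" "t \<le> 1" "u \<in> carrier" "v \<in> carrier"
  shows "path_point t u \<in> mspace (path_space t)"
    and "mdist (path_space t) (path_point t u) (path_point t v) = path_dist t u v"
  using assms to_P to_T weights_0 weights_1 mspace_path_space mdist_path_space
  by (auto simp: path_point_def path_space_def path_dist_def P_pull_def T_pull_def)

lemma path_point_surj:
  assumes "0 \<le> t" "t \<le> 1" "w \<in> mspace (path_space t)"
  shows "\<exists>u\<in>carrier. path_point t u = w"
proof -
  consider "t = 0" | "t = 1" | "0 < t" "t < 1" using assms(1,2) by fastforce
  thus ?thesis
  proof cases
    case 1
    thus ?thesis using assms(3) by (intro bexI[of _ "Inl w"]) (auto simp: path_point_def to_P_def path_space_def)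
  next
    case 2
    thus ?thesis using assms(3) by (intro bexI[of _ "Inr w"]) (auto simp: path_point_def to_T_def path_space_def)
  next
    case 3
    thus ?thesis using assms(3) mspace_path_space[OF 3] by (auto simp: path_point_def)
  qed
qed

lemma path_dist_distortion:
  assumes "0 \<le> t" "t \<le> 1" "u \<in> carrier" "v \<in> carrier"
  shows "\<bar>path_dist t u v - mdist M (to_M u) (to_M v)\<bar> \<le> 2*r"
proof -
  let ?d = "mdist M (to_M u) (to_M v)"
  note w = weights_nonneg[OF assms(1,2)]
  have "glue_weight t * (?d - 2*r) \<le> glue_weight t * glued u v" "glue_weight t * glued u v \<le> glue_weight t * (?d + 2*r)"
    using glued_distortion[OF assms(3,4)] w by (simp_all add: mult_left_mono)
  moreover have "left_weight t * (?d - 2*r) \<le> left_weight t * P_pull u v" "left_weight t * P_pull u v \<le> left_weight t * (?d + 2*r)"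
    using P_pull_distortion[OF assms(3,4)] w by (simp_all add: mult_left_mono)
  moreover have "right_weight t * (?d - 2*r) \<le> right_weight t * T_pull u v" "right_weight t * T_pull u v \<le> right_weight t * (?d + 2*r)"
    using T_pull_distortion[OF assms(3,4)] w by (simp_all add: mult_left_mono)
  moreover have "glue_weight t * e + left_weight t * e + right_weight t * e = e" for e
    using weights_sum[of t] by (metis distrib_right mult_1)
  ultimately show ?thesis unfolding path_dist_def abs_le_iff by (smt (verit))
qed

lemma path_dist_lipschitz:
  assumes "u \<in> carrier" "v \<in> carrier"
  shows "\<bar>path_dist t u v - path_dist t' u v\<bar> \<le> 16*r*\<bar>t - t'\<bar>"
proof -
  have eq: "path_dist s u v = glued u v + left_weight s * (P_pull u v - glued u v) + right_weight s * (T_pull u v - glued u v)" for s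
    unfolding path_dist_def glue_weight_def by (simp add: algebra_simps)
  have "path_dist t u v - path_dist t' u v =
      (left_weight t - left_weight t') * (P_pull u v - glued u v) + (right_weight t - right_weight t') * (T_pull u v - glued u v)"
    unfolding eq by (simp add: algebra_simps)
  hence "\<bar>path_dist t u v - path_dist t' u v\<bar> \<le> \<bar>left_weight t - left_weight t'\<bar> * \<bar>P_pull u v - glued u v\<bar> +
      \<bar>right_weight t - right_weight t'\<bar> * \<bar>T_pull u v - glued u v\<bar>"
    by (simp add: abs_mult[symmetric] abs_triangle_ineq)
  also have "\<dots> \<le> (2*\<bar>t - t'\<bar>) * (4*r) + (2*\<bar>t - t'\<bar>) * (4*r)"
    using glued_distortion[OF assms] P_pull_distortion[OF assms] T_pull_distortion[OF assms]
    by (intro add_mono mult_mono) (use weights_lipschitz in auto)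
  finally show ?thesis by (simp add: algebra_simps)
qed

text \<open>Points of \<open>P\<close> closer than \<open>s(M) - 2r\<close> lie over the same point of \<open>M\<close>, where the twin
  part of the metric vanishes; so \<open>P\<close> embeds continuously into every intermediate space.\<close>

lemma continuous_map_P_path_space:
  assumes "0 < t" "t < 1"
  shows "continuous_map (mtopology_of P) (mtopology_of (path_space t)) (sum_to_real \<circ> Inl)"
  unfolding mtopology_of_def
proof (subst Metric_space.metric_continuous_map[OF Metric_space_mspace_mdist Metric_space_mspace_mdist],
    intro conjI ballI allI impI)
  show "(sum_to_real \<circ> Inl) ` mspace P \<subseteq> mspace (path_space t)"
    using mspace_path_space[OF assms] by auto
  fix a \<epsilon> assume a: "a \<in> mspace P" and "0 < (\<epsilon>::real)"
  show "\<exists>\<delta>>0. \<forall>x. x \<in> mspace P \<and> mdist P a x < \<delta> \<longrightarrow>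
      mdist (path_space t) ((sum_to_real \<circ> Inl) a) ((sum_to_real \<circ> Inl) x) < \<epsilon>"
  proof (intro exI conjI allI impI)
    show "0 < min \<epsilon> (s_inv M - 2*r)" using \<open>0 < \<epsilon>\<close> r_s_inv r_pos by simp
    fix x assume x: "x \<in> mspace P \<and> mdist P a x < min \<epsilon> (s_inv M - 2*r)"
    hence "\<phi> a = \<phi> x" using \<phi>_eq_if_close a by simp
    hence "mdist (path_space t) ((sum_to_real \<circ> Inl) a) ((sum_to_real \<circ> Inl) x) =
        (glue_weight t + left_weight t) * mdist P a x"
      using mdist_path_space[OF assms]
      by (simp add: path_dist_def P_pull_def T_pull_def to_P_def to_T_def algebra_simps)
    also have "\<dots> \<le> mdist P a x"
      using weights_nonneg[of t] weights_sum[of t] assms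
      by (intro mult_left_le_one_le[OF mdist_nonneg]) auto
    finally show "mdist (path_space t) ((sum_to_real \<circ> Inl) a) ((sum_to_real \<circ> Inl) x) < \<epsilon>"
      using x by simp
  qed
qed

lemma cms_path_space:
  assumes "0 \<le> t" "t \<le> 1"
  shows "cms (path_space t)"
proof (cases "t = 0 \<or> t = 1")
  case True
  thus ?thesis using cms_P cms_twin_space by (auto simp: path_space_def)
next
  case False
  hence t: "0 < t" "t < 1" using assms by auto
  have "compactin (mtopology_of (path_space t)) ((sum_to_real \<circ> Inl) ` mspace P)"
    using image_compactin[OF _ continuous_map_P_path_space[OF t]] cms_P
    unfolding cms_def compact_space_def by simp
  moreover have "compactin (mtopology_of (path_space t)) ((sum_to_real \<circ> Inr) ` twin_carrier)"
    by (rule finite_imp_compactin) (use finite_twin_carrier mspace_path_space[OF t] in auto)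
  moreover have "sum_to_real ` carrier = (sum_to_real \<circ> Inl) ` mspace P \<union> (sum_to_real \<circ> Inr) ` twin_carrier"
    unfolding Plus_def by auto
  ultimately show ?thesis
    using compactin_Un cms_P mspace_path_space[OF t] unfolding cms_def compact_space_def by force
qed

lemma dGH_path_space_le:
  assumes t: "0 \<le> t" "t \<le> 1" and t': "0 \<le> t'" "t' \<le> 1"
  shows "dGH (path_space t) (path_space t') \<le> 8*r*\<bar>t - t'\<bar>"
proof -
  define R where "R = (\<lambda>u. (path_point t u, path_point t' u)) ` carrier"
  have "correspondence R (path_space t) (path_space t')"
    unfolding correspondence_def
  proof (intro conjI ballI)
    show "R \<subseteq> mspace (path_space t) \<times> mspace (path_space t')"
      unfolding R_def using path_point(1)[OF t] path_point(1)[OF t'] by blast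
    fix w assume "w \<in> mspace (path_space t)"
    then obtain u where "u \<in> carrier" "path_point t u = w" using path_point_surj[OF t] by blast
    thus "\<exists>w'. (w, w') \<in> R" unfolding R_def by blast
  next
    fix w' assume "w' \<in> mspace (path_space t')"
    then obtain u where "u \<in> carrier" "path_point t' u = w'" using path_point_surj[OF t'] by blast
    thus "\<exists>w. (w, w') \<in> R" unfolding R_def by blast
  qed
  moreover have "distortion_le R (path_space t) (path_space t') (2*(8*r*\<bar>t - t'\<bar>))"
    unfolding distortion_le_def R_def
    using path_point(2)[OF t] path_point(2)[OF t'] path_dist_lipschitz by (simp add: mult.assoc)
  ultimately show ?thesis
    using dGH_le_correspondence cms_path_space t t' r_pos by simp
qed

definition path_proj :: "real \<Rightarrow> real" where "path_proj w = to_M (real_to_sum w)"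

lemma onto_distortion_path_proj:
  assumes t: "0 < t" "t < 1"
  shows "onto_distortion_le (path_space t) M path_proj (2*r)"
  unfolding onto_distortion_le_def mspace_path_space[OF t]
proof (intro conjI ballI)
  show "path_proj ` sum_to_real ` carrier = mspace M"
  proof
    show "path_proj ` sum_to_real ` carrier \<subseteq> mspace M"
      unfolding path_proj_def image_subset_iff using to_M_in_M by simp
    show "mspace M \<subseteq> path_proj ` sum_to_real ` carrier"
    proof
      fix m assume "m \<in> mspace M"
      hence "Inl (section_P m) \<in> carrier" "path_proj (sum_to_real (Inl (section_P m))) = m"
        using section_P by (auto simp: path_proj_def to_M_def)
      thus "m \<in> path_proj ` sum_to_real ` carrier" by (metis image_eqI)
    qed
  qed
next
  fix w w' assume "w \<in> sum_to_real ` carrier" "w' \<in> sum_to_real ` carrier"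
  then obtain u u' where "u \<in> carrier" "u' \<in> carrier" "w = sum_to_real u" "w' = sum_to_real u'"
    by blast
  thus "\<bar>mdist (path_space t) w w' - mdist M (path_proj w) (path_proj w')\<bar> \<le> 2*r"
    using path_dist_distortion t mdist_path_space[OF t] by (simp add: path_proj_def)
qed

lemma path_proj_distortion_attained:
  assumes t: "0 < t" "t < 1" and "\<rho> < r"
  shows "\<exists>x\<in>mspace (path_space t). \<exists>x'\<in>mspace (path_space t).
           2*\<rho> < \<bar>mdist (path_space t) x x' - mdist M (path_proj x) (path_proj x')\<bar>"
proof (cases "t \<le> 1/2")
  case True
  obtain x x' where xx: "x \<in> mspace P" "x' \<in> mspace P"
    "2*\<rho> < \<bar>mdist P x x' - mdist M (\<phi> x) (\<phi> x')\<bar>"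
    using distortion_attained_if_dGH_eq[OF cms_P dGH_P \<phi> \<open>\<rho> < r\<close>] by blast
  have "mdist (path_space t) (sum_to_real (Inl x)) (sum_to_real (Inl x')) = mdist P x x'"
    using mdist_path_space[OF t] right_weight_eq_0[OF True] weights_sum[of t]
    by (simp add: path_dist_def P_pull_def to_P_def) (metis distrib_right mult_1)
  hence "2*\<rho> < \<bar>mdist (path_space t) (sum_to_real (Inl x)) (sum_to_real (Inl x')) -
      mdist M (path_proj (sum_to_real (Inl x))) (path_proj (sum_to_real (Inl x')))\<bar>"
    using xx by (simp add: path_proj_def to_M_def)
  moreover have "sum_to_real (Inl x) \<in> mspace (path_space t)" "sum_to_real (Inl x') \<in> mspace (path_space t)"
    using xx mspace_path_space[OF t] by auto
  ultimately show ?thesis by blast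
next
  case False
  have "mdist (path_space t) (sum_to_real (Inr twin_point)) (sum_to_real (Inr base_point)) = 2*r"
    using mdist_path_space[OF t] left_weight_eq_0[of t] False weights_sum[of t] twin_dist_twin_base
    by (simp add: path_dist_def T_pull_def to_T_def) (metis distrib_right mult_1)
  hence "2*\<rho> < \<bar>mdist (path_space t) (sum_to_real (Inr twin_point)) (sum_to_real (Inr base_point)) -
      mdist M (path_proj (sum_to_real (Inr twin_point))) (path_proj (sum_to_real (Inr base_point)))\<bar>"
    using twin_points_distortion twin_dist_twin_base \<open>\<rho> < r\<close> by (simp add: path_proj_def to_M_def)
  moreover have "sum_to_real (Inr twin_point) \<in> mspace (path_space t)"
    "sum_to_real (Inr base_point) \<in> mspace (path_space t)"
    using twin_points_in_carrier mspace_path_space[OF t] by auto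
  ultimately show ?thesis by blast
qed

lemma dGH_M_path_space:
  assumes "0 \<le> t" "t \<le> 1"
  shows "dGH M (path_space t) = r"
proof -
  consider "t = 0" | "t = 1" | "0 < t" "t < 1" using assms by fastforce
  thus ?thesis
  proof cases
    case 1 thus ?thesis using dGH_P by (simp add: path_space_def)
  next
    case 2 thus ?thesis using dGH_twin_space by (simp add: path_space_def)
  next
    case 3
    note \<psi> = onto_distortion_path_proj[OF 3] and X = cms_path_space[OF assms]
    show ?thesis
    proof (rule antisym)
      show "dGH M (path_space t) \<le> r" using dGH_le_onto_distortion[OF cms_M X \<psi>] r_pos by simp
      show "r \<le> dGH M (path_space t)"
        by (rule dGH_ge_if_distortion_attained[OF X \<psi> path_proj_distortion_attained[OF 3]])
    qed
  qed
qed

end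

lemma (in GH_sphere) path_to_twin_space:
  assumes "cms P" "dGH M P = r"
  shows "\<exists>\<beta>. \<beta> 0 = P \<and> \<beta> 1 = twin_space \<and> (\<forall>t\<in>{0..1}. cms (\<beta> t) \<and> dGH M (\<beta> t) = r) \<and>
    (\<forall>t\<in>{0..1}. \<forall>t'\<in>{0..1}. dGH (\<beta> t) (\<beta> t') \<le> 8*r*\<bar>t - t'\<bar>)"
proof -
  obtain \<phi> where "onto_distortion_le P M \<phi> (2*r)" using onto_distortion_if_dGH_eq[OF assms] .
  then interpret sphere_path M r P \<phi> using assms by unfold_locales
  show ?thesis
    using path_space_0 path_space_1 cms_path_space dGH_M_path_space dGH_path_space_le
    by (intro exI[of _ path_space]) auto
qed

lemma isometric_refl: "isometric X X"
  unfolding isometric_def by (rule exI[of _ id]) (simp add: bij_betw_id)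

text \<open>A path that is Lipschitz on each half of \<open>[0,1]\<close> is continuous: near \<open>t \<noteq> 1/2\<close> only one
  half matters, and at \<open>t = 1/2\<close> both do.\<close>

lemma continuous_if_Lipschitz_on_halves:
  fixes \<gamma> :: "real \<Rightarrow> mspc"
  assumes "0 \<le> K"
    and halves: "\<And>t t'. t \<in> {0..1} \<Longrightarrow> t' \<in> {0..1} \<Longrightarrow> t \<le> 1/2 \<and> t' \<le> 1/2 \<or> 1/2 \<le> t \<and> 1/2 \<le> t' \<Longrightarrow>
                   dGH (\<gamma> t) (\<gamma> t') \<le> K * \<bar>t - t'\<bar>"
  shows "\<forall>t\<in>{0..1}. \<forall>\<epsilon>>0. \<exists>\<delta>>0. \<forall>t'\<in>{0..1}. \<bar>t' - t\<bar> < \<delta> \<longrightarrow> dGH (\<gamma> t) (\<gamma> t') < \<epsilon>"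
proof (intro ballI allI impI)
  fix t \<epsilon> :: real assume t: "t \<in> {0..1}" and "0 < \<epsilon>"
  define \<delta> where "\<delta> = min (\<epsilon> / (K + 1)) (if t = 1/2 then 1 else \<bar>t - 1/2\<bar>)"
  have "0 < \<delta>" using \<open>0 < \<epsilon>\<close> \<open>0 \<le> K\<close> unfolding \<delta>_def by auto
  moreover have "dGH (\<gamma> t) (\<gamma> t') < \<epsilon>" if t': "t' \<in> {0..1}" "\<bar>t' - t\<bar> < \<delta>" for t'
  proof -
    have "t \<le> 1/2 \<and> t' \<le> 1/2 \<or> 1/2 \<le> t \<and> 1/2 \<le> t'"
      using t'(2) unfolding \<delta>_def by (cases "t = 1/2") auto
    hence "dGH (\<gamma> t) (\<gamma> t') \<le> K * \<bar>t - t'\<bar>" using halves t t'(1) by blast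
    also have "\<dots> \<le> K * \<delta>" using t'(2) \<open>0 \<le> K\<close> by (simp add: abs_minus_commute mult_left_mono)
    also have "\<dots> < \<epsilon>"
    proof -
      have "\<delta> \<le> \<epsilon> / (K + 1)" unfolding \<delta>_def by simp
      hence "(K + 1) * \<delta> \<le> \<epsilon>" using pos_le_divide_eq[of "K + 1" \<delta> \<epsilon>] \<open>0 \<le> K\<close> by (simp add: mult.commute)
      thus ?thesis using \<open>0 < \<delta>\<close> by (simp add: algebra_simps)
    qed
    finally show ?thesis .
  qed
  ultimately show "\<exists>\<delta>>0. \<forall>t'\<in>{0..1}. \<bar>t' - t\<bar> < \<delta> \<longrightarrow> dGH (\<gamma> t) (\<gamma> t') < \<epsilon>" by blast
qed

lemma GH_path_connected_if_paths_to_hub: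
  assumes "0 \<le> L"
    and paths: "\<And>Y. S Y \<Longrightarrow> \<exists>\<beta>. \<beta> 0 = Y \<and> \<beta> 1 = Z \<and> (\<forall>t\<in>{0..1}. S (\<beta> t)) \<and>
                    (\<forall>t\<in>{0..1}. \<forall>t'\<in>{0..1}. dGH (\<beta> t) (\<beta> t') \<le> L * \<bar>t - t'\<bar>)"
  shows "GH_path_connected S"
  unfolding GH_path_connected_def
proof (intro allI impI)
  fix Y1 Y2 assume "S Y1 \<and> S Y2"
  obtain \<beta>1 where \<beta>1: "\<beta>1 0 = Y1" "\<beta>1 1 = Z" "\<forall>t\<in>{0..1}. S (\<beta>1 t)"
      "\<forall>t\<in>{0..1}. \<forall>t'\<in>{0..1}. dGH (\<beta>1 t) (\<beta>1 t') \<le> L * \<bar>t - t'\<bar>"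
    using paths \<open>S Y1 \<and> S Y2\<close> by blast
  obtain \<beta>2 where \<beta>2: "\<beta>2 0 = Y2" "\<beta>2 1 = Z" "\<forall>t\<in>{0..1}. S (\<beta>2 t)"
      "\<forall>t\<in>{0..1}. \<forall>t'\<in>{0..1}. dGH (\<beta>2 t) (\<beta>2 t') \<le> L * \<bar>t - t'\<bar>"
    using paths \<open>S Y1 \<and> S Y2\<close> by blast
  define \<gamma> where "\<gamma> t = (if t \<le> 1/2 then \<beta>1 (2*t) else \<beta>2 (2 - 2*t))" for t
  have lo: "\<gamma> t = \<beta>1 (2*t)" if "t \<le> 1/2" for t using that unfolding \<gamma>_def by simp
  have hi: "\<gamma> t = \<beta>2 (2 - 2*t)" if "1/2 \<le> t" for t
  proof (cases "t = 1/2")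
    case True thus ?thesis using \<beta>1(2) \<beta>2(2) unfolding True \<gamma>_def by simp
  qed (use that in \<open>simp add: \<gamma>_def\<close>)
  have "\<forall>t\<in>{0..1}. S (\<gamma> t)"
  proof
    fix t :: real assume "t \<in> {0..1}"
    show "S (\<gamma> t)"
    proof (cases "t \<le> 1/2")
      case True
      hence "2*t \<in> {0..1}" using \<open>t \<in> {0..1}\<close> by auto
      thus ?thesis using \<beta>1(3) lo[OF True] by simp
    next
      case False
      hence "2 - 2*t \<in> {0..1}" using \<open>t \<in> {0..1}\<close> by auto
      thus ?thesis using \<beta>2(3) hi False by simp
    qed
  qed
  moreover have "isometric (\<gamma> 0) Y1" "isometric (\<gamma> 1) Y2"
    using lo[of 0] hi[of 1] \<beta>1(1) \<beta>2(1) isometric_refl by simp_all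
  moreover have "\<forall>t\<in>{0..1}. \<forall>\<epsilon>>0. \<exists>\<delta>>0. \<forall>t'\<in>{0..1}. \<bar>t' - t\<bar> < \<delta> \<longrightarrow> dGH (\<gamma> t) (\<gamma> t') < \<epsilon>"
  proof (rule continuous_if_Lipschitz_on_halves[of "2*L"])
    fix t t' :: real assume tt: "t \<in> {0..1}" "t' \<in> {0..1}"
      and half: "t \<le> 1/2 \<and> t' \<le> 1/2 \<or> 1/2 \<le> t \<and> 1/2 \<le> t'"
    from half show "dGH (\<gamma> t) (\<gamma> t') \<le> 2*L * \<bar>t - t'\<bar>"
    proof
      assume h: "t \<le> 1/2 \<and> t' \<le> 1/2"
      hence "2*t \<in> {0..1}" "2*t' \<in> {0..1}" using tt by auto
      hence "dGH (\<beta>1 (2*t)) (\<beta>1 (2*t')) \<le> L * \<bar>2*t - 2*t'\<bar>" using \<beta>1(4) by blast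
      moreover have "\<bar>2*t - 2*t'\<bar> = 2 * \<bar>t - t'\<bar>" by (auto simp: abs_if)
      ultimately show ?thesis using lo h by (simp add: ac_simps)
    next
      assume h: "1/2 \<le> t \<and> 1/2 \<le> t'"
      hence "2 - 2*t \<in> {0..1}" "2 - 2*t' \<in> {0..1}" using tt by auto
      hence "dGH (\<beta>2 (2 - 2*t)) (\<beta>2 (2 - 2*t')) \<le> L * \<bar>(2 - 2*t) - (2 - 2*t')\<bar>" using \<beta>2(4) by blast
      moreover have "\<bar>(2 - 2*t) - (2 - 2*t')\<bar> = 2 * \<bar>t - t'\<bar>" by (auto simp: abs_if)
      ultimately show ?thesis using hi h by (simp add: ac_simps)
    qed
  qed (use \<open>0 \<le> L\<close> in simp)
  ultimately show "\<exists>\<gamma>::real \<Rightarrow> mspc. (\<forall>t\<in>{0..1}. S (\<gamma> t)) \<and>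
      (\<forall>t\<in>{0..1}. \<forall>\<epsilon>>0. \<exists>\<delta>>0. \<forall>t'\<in>{0..1}. \<bar>t' - t\<bar> < \<delta> \<longrightarrow> dGH (\<gamma> t) (\<gamma> t') < \<epsilon>) \<and>
      isometric (\<gamma> 0) Y1 \<and> isometric (\<gamma> 1) Y2"
    by blast
qed

theorem corollary4:
  fixes M :: mspc and r :: real
  assumes "finite (mspace M)" and "generic M"
    and "0 < r" and "r < min (s_inv M / 4) (min (e_inv M / 4) (t_inv M / 6))"
  shows "GH_path_connected (\<lambda>Y. cms Y \<and> dGH M Y = r)"
proof -
  have "mspace M \<noteq> {}" using \<open>generic M\<close> unfolding generic_def by auto
  then interpret GH_sphere M r using assms by unfold_locales auto
  show ?thesis
    using path_to_twin_space
    by (intro GH_path_connected_if_paths_to_hub[where Z=twin_space and L="8*r"]) (use assms(3) in auto)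
qed

end
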